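(* Suppose that the Collatz map $T$ has no cycle of positive integers other than the trivial cycle $\{1,2\}$. Then the operator $\mathcal{T}$ on $H_{ber}^2(D)/X$ is hypercyclic, i.e. there exists a vector $v\in H_{ber}^2(D)/X$ whose orbit $\{\mathcal{T}^n v: n\ge 0\}$ is dense in $H_{ber}^2(D)/X$.
   Context: $T:\mathbb{Z}\to\mathbb{Z}$ is the (reduced) Collatz map: $T(n)=\frac{3n+1}{2}$ for odd $n$ and $T(n)=\frac n2$ for even $n$. A cycle is a finite set $\{n_1,\dots,n_k\}$ with $T(n_i)=n_{i+1}$, $T(n_k)=n_1$. $D$ is the open unit disk. $H_{ber}^2(D)$ is the Bergman space of holomorphic $f$ on $D$ with $\|f\|^2=\int_D|f|^2\,dA<\infty$ (so $\|z^n\|^2=\frac{\pi}{n+1}$). The operator $\mathcal{T}$ acts on power series by $\sum_{n\ge0} a_nz^n\mapsto\sum_{n\ge0} a_n z^{T(n)}$ (equivalently $\mathcal{T}f(z)=(Sf)(\sqrt z)+\sqrt z\,(Af)(z^{3/2})$ with $S,A$ the even and odd parts of $f$); it is bounded on $H_{ber}^2(D)$, leaves $X=\operatorname{span}\{1,z,z^2\}$ invariant, and induces a bounded operator on the quotient Banach space $H_{ber}^2(D)/X$, still denoted $\mathcal{T}$. *)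

theory Defs
  imports "HOL-Analysis.Analysis"
begin

definition collatz :: "int \<Rightarrow> int" where
  "collatz n = (if even n then n div 2 else (3 * n + 1) div 2)"

definition collatz_cycle :: "int set \<Rightarrow> bool" where
  "collatz_cycle C \<longleftrightarrow> (\<exists>ns. ns \<noteq> [] \<and> distinct ns \<and> set ns = C \<and>
      (\<forall>i < length ns. collatz (ns ! i) = ns ! ((i + 1) mod length ns)))"

definition collatz_nat :: "nat \<Rightarrow> nat" where
  "collatz_nat n = nat (collatz (int n))"

definition bergman :: "(complex \<Rightarrow> complex) set" where
  "bergman = {f. f holomorphic_on ball 0 1 \<and>
                 (\<lambda>z. (cmod (f z))\<^sup>2) integrable_on ball 0 1}"

definition berg_norm :: "(complex \<Rightarrow> complex) \<Rightarrow> real" where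
  "berg_norm f = sqrt (integral (ball 0 1) (\<lambda>z. (cmod (f z))\<^sup>2))"

definition taylor_coeff :: "(complex \<Rightarrow> complex) \<Rightarrow> nat \<Rightarrow> complex" where
  "taylor_coeff f n = (deriv ^^ n) f 0 / of_nat (fact n)"

definition collatz_op :: "(complex \<Rightarrow> complex) \<Rightarrow> (complex \<Rightarrow> complex)" where
  "collatz_op f = (\<lambda>z. \<Sum>n. taylor_coeff f n * z ^ collatz_nat n)"

definition polyX :: "(complex \<Rightarrow> complex) set" where
  "polyX = {p. \<exists>a b c. p = (\<lambda>z. a + b * z + c * z\<^sup>2)}"

text \<open>Distance in the quotient Banach space H_ber^2(D)/X between the classes of u and w.\<close>
definition quot_dist :: "(complex \<Rightarrow> complex) \<Rightarrow> (complex \<Rightarrow> complex) \<Rightarrow> real" where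
  "quot_dist u w = Inf {berg_norm (\<lambda>z. u z - w z - p z) | p. p \<in> polyX}"

end

theory Submission
  imports Defs "HOL-Complex_Analysis.Complex_Analysis"
begin

text \<open>
  The Taylor coefficients of \<open>\<T>f\<close> arise by summing those of \<open>f\<close> over Collatz preimages, and
  since monomials are orthogonal, \<open>\<parallel>f\<parallel>\<^sup>2 = \<Sum> |a\<^sub>n|\<^sup>2 w\<^sub>n\<close> with weights \<open>w\<^sub>n = \<parallel>z\<^sup>n\<parallel>\<^sup>2\<close>
  decreasing to 0. If \<open>{1, 2}\<close> is the only positive cycle, the orbit of every \<open>n \<ge> 1\<close>
  either drops below 3, where it is invisible modulo \<open>X\<close>, or tends to infinity, where the
  weights vanish; so \<open>\<T>\<^sup>k y \<longrightarrow> 0\<close> modulo \<open>X\<close> for every polynomial \<open>y\<close>.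

  Enumerate the polynomials \<open>y\<^sub>j\<close> with Gaussian rational coefficients in degrees \<open>\<ge> 3\<close>, each
  one infinitely often, and put \<open>f = \<Sum>\<^sub>j y\<^sub>j(z\<^bsup>2\<^bsup>N\<^sub>j\<^esup>\<^esup>)\<close> with rapidly increasing \<open>N\<^sub>j\<close>.
  As \<open>T\<close> halves even numbers, \<open>\<T>\<^bsup>N\<^sub>J\<^esup> f\<close> is the sum of the images \<open>\<T>\<^bsup>N\<^sub>J - N\<^sub>i\<^esup> y\<^sub>i\<close>
  (\<open>i < J\<close>), which are small modulo \<open>X\<close> once the gaps are large, of \<open>y\<^sub>J\<close> itself, and of the
  still dilated \<open>y\<^sub>j(z\<^bsup>2\<^bsup>N\<^sub>j - N\<^sub>J\<^esup>\<^esup>)\<close> (\<open>j > J\<close>), which are small because \<open>w\<^sub>n \<longrightarrow> 0\<close>.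
  Hence the orbit of \<open>f\<close> approaches every \<open>y\<^sub>J\<close> modulo \<open>X\<close>, and these are dense.
\<close>

section \<open>Rotation invariance of planar Lebesgue measure\<close>

definition complex_of_vec2 :: "real^2 \<Rightarrow> complex" where
  "complex_of_vec2 v = Complex (v$1) (v$2)"

lemma borel_measurable_complex_of_vec2[measurable]: "complex_of_vec2 \<in> borel_measurable borel"
  unfolding complex_of_vec2_def by (intro borel_measurable_continuous_onI continuous_intros)

lemma mem_box_complex_iff:
  "x \<in> box (l::complex) u \<longleftrightarrow> Re l < Re x \<and> Re x < Re u \<and> Im l < Im x \<and> Im x < Im u"
  by (auto simp: box_def Basis_complex_def)

lemma prod_Basis_vec2: "(\<Prod>b\<in>(Basis::(real^2) set). (x::real^2) \<bullet> b) = x$1 * x$2"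
proof -
  have "(\<Prod>b\<in>(Basis::(real^2) set). x \<bullet> b) = (\<Prod>i\<in>UNIV. x$i)"
    by (simp add: Basis_vec_def cart_eq_inner_axis axis_eq_axis prod.UNION_disjoint)
  also have "\<dots> = x$1 * x$2" by (simp add: UNIV_2)
  finally show ?thesis .
qed

lemma ball_Basis_vec2_le_iff:
  "(\<forall>b\<in>(Basis::(real^2) set). (x::real^2) \<bullet> b \<le> y \<bullet> b) \<longleftrightarrow> x$1 \<le> y$1 \<and> x$2 \<le> y$2"
  by (auto simp: Basis_vec_def cart_eq_inner_axis forall_2)

lemma distr_lborel_complex_of_vec2: "distr lborel borel complex_of_vec2 = lborel"
proof (rule lborel_eqI[symmetric])
  fix l u :: complex
  assume le: "\<And>b. b \<in> Basis \<Longrightarrow> l \<bullet> b \<le> u \<bullet> b"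
  define a :: "real^2" where "a = (\<chi> i. if i = 1 then Re l else Im l)"
  define b :: "real^2" where "b = (\<chi> i. if i = 1 then Re u else Im u)"
  have ab: "a$1 = Re l" "a$2 = Im l" "b$1 = Re u" "b$2 = Im u" by (auto simp: a_def b_def)
  have preimage: "complex_of_vec2 -` box l u = box a b"
    by (auto simp: complex_of_vec2_def mem_box_complex_iff mem_box_cart forall_2 ab)
  have "Re l \<le> Re u" "Im l \<le> Im u"
    using le[of 1] le[of \<i>] by (auto simp: Basis_complex_def)
  then have "emeasure (distr lborel borel complex_of_vec2) (box l u) = (Re u - Re l) * (Im u - Im l)"
    by (simp add: emeasure_distr preimage emeasure_lborel_box_eq ball_Basis_vec2_le_iff
        prod_Basis_vec2 ab)
  then show "emeasure (distr lborel borel complex_of_vec2) (box l u) = (\<Prod>b\<in>Basis. (u - l) \<bullet> b)"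
    by (simp add: Basis_complex_def)
qed simp

definition rotation2 :: "real \<Rightarrow> real \<Rightarrow> real^2 \<Rightarrow> real^2" where
  "rotation2 a b v = (\<chi> i. if i = 1 then a * v$1 - b * v$2 else b * v$1 + a * v$2)"

lemma rotation2_nth[simp]:
  "rotation2 a b v $ 1 = a * v$1 - b * v$2" "rotation2 a b v $ 2 = b * v$1 + a * v$2"
  by (auto simp: rotation2_def)

lemma linear_rotation2: "linear (rotation2 a b)"
  by (rule linearI) (auto simp: vec_eq_iff forall_2 algebra_simps)

lemma continuous_on_rotation2: "continuous_on S (rotation2 a b)"
  using linear_rotation2 linear_conv_bounded_linear linear_continuous_on by blast

lemma borel_measurable_rotation2[measurable]: "rotation2 a b \<in> borel_measurable borel"
  by (intro borel_measurable_continuous_onI continuous_on_rotation2)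

lemma norm_vec2: "norm (v::real^2) = sqrt ((v$1)^2 + (v$2)^2)"
  by (simp add: norm_vec_def L2_set_def UNIV_2)

lemma orthogonal_transformation_rotation2:
  assumes "a^2 + b^2 = 1" shows "orthogonal_transformation (rotation2 a b)"
proof -
  have "(a * v$1 - b * v$2)^2 + (b * v$1 + a * v$2)^2 = (a^2 + b^2) * ((v$1)^2 + (v$2)^2)"
    for v :: "real^2"
    by (simp add: power2_eq_square algebra_simps)
  then show ?thesis
    using assms by (simp add: orthogonal_transformation linear_rotation2 norm_vec2)
qed

lemma rotation2_inverse:
  assumes "a^2 + b^2 = 1" shows "rotation2 a (-b) (rotation2 a b v) = v"
proof -
  have "a * (a * x - b * y) + b * (b * x + a * y) = (a^2 + b^2) * x"
    and "- b * (a * x - b * y) + a * (b * x + a * y) = (a^2 + b^2) * y" for x y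
    by (simp_all add: power2_eq_square algebra_simps)
  then show ?thesis using assms by (simp add: vec_eq_iff forall_2)
qed

lemma distr_lborel_rotation2:
  assumes ab: "a^2 + b^2 = 1" shows "distr lborel borel (rotation2 a b) = lborel"
proof (rule lborel_eqI[symmetric])
  fix l u :: "real^2"
  assume le: "\<And>b. b \<in> Basis \<Longrightarrow> l \<bullet> b \<le> u \<bullet> b"
  have ab': "a^2 + (-b)^2 = 1" using ab by simp
  have preimage: "rotation2 a b -` box l u = rotation2 a (-b) ` box l u"
    using rotation2_inverse[OF ab] rotation2_inverse[OF ab', simplified]
    by (auto intro!: image_eqI)
  have "rotation2 a b -` box l u \<in> sets borel"
    by (intro borel_open open_vimage open_box continuous_on_rotation2)
  then have "emeasure (distr lborel borel (rotation2 a b)) (box l u)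
      = emeasure lebesgue (rotation2 a (-b) ` box l u)"
    by (simp add: emeasure_distr preimage[symmetric] emeasure_completion)
  also have "\<dots> = measure lebesgue (box l u)"
    using measurable_orthogonal_image[OF orthogonal_transformation_rotation2[OF ab']]
      measure_orthogonal_image[OF orthogonal_transformation_rotation2[OF ab']]
    by (simp add: emeasure_eq_measure2)
  also have "\<dots> = emeasure lborel (box l u)"
    by (simp add: emeasure_eq_measure2 measure_completion)
  finally show "emeasure (distr lborel borel (rotation2 a b)) (box l u) = (\<Prod>b\<in>Basis. (u - l) \<bullet> b)"
    using le by (simp add: emeasure_lborel_box_eq)
qed simp

lemma cis_mult_complex_of_vec2:
  "cis x * complex_of_vec2 v = complex_of_vec2 (rotation2 (cos x) (sin x) v)"
  by (simp add: complex_of_vec2_def cis.ctr complex_eq_iff)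

lemma distr_lborel_mult_cis: "distr lborel borel (\<lambda>z. cis x * z) = (lborel :: complex measure)"
proof -
  have "(\<lambda>z. cis x * z) \<circ> complex_of_vec2 = complex_of_vec2 \<circ> rotation2 (cos x) (sin x)"
    by (simp add: fun_eq_iff cis_mult_complex_of_vec2)
  then have "distr lborel borel (\<lambda>z. cis x * z)
      = distr (distr lborel borel (rotation2 (cos x) (sin x))) borel complex_of_vec2"
    by (simp add: distr_lborel_complex_of_vec2[symmetric] distr_distr)
  then show ?thesis
    by (simp add: distr_lborel_rotation2 distr_lborel_complex_of_vec2)
qed

lemma lborel_integral_mult_cis:
  fixes f :: "complex \<Rightarrow> 'b::{banach, second_countable_topology}"
  assumes [measurable]: "f \<in> borel_measurable borel"
  shows "(\<integral>z. f (cis x * z) \<partial>lborel) = (\<integral>z. f z \<partial>lborel)"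
proof -
  have "(\<integral>z. f z \<partial>lborel) = (\<integral>z. f z \<partial>(distr lborel borel (\<lambda>z. cis x * z)))"
    by (simp add: distr_lborel_mult_cis)
  also have "\<dots> = (\<integral>z. f (cis x * z) \<partial>lborel)"
    by (rule integral_distr) auto
  finally show ?thesis by simp
qed

section \<open>Parseval's identity for the Bergman norm\<close>

lemma pred_in_ball[measurable]: "Measurable.pred borel (\<lambda>x::complex. x \<in> ball 0 r)"
  by (simp add: pred_def borel_open)

lemma borel_measurable_monomial_cnj[measurable]:
  "(\<lambda>x::complex. x^n * cnj x^m) \<in> borel_measurable borel"
  by (intro borel_measurable_continuous_onI continuous_intros)

lemma integrable_indicator_ball_continuous:
  fixes g :: "complex \<Rightarrow> 'b::{banach, second_countable_topology}"
  assumes "continuous_on (cball 0 r) g" and [measurable]: "g \<in> borel_measurable borel"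
  shows "integrable lborel (\<lambda>z. indicator (ball 0 r) z *\<^sub>R g z)"
proof (rule Bochner_Integration.integrable_bound)
  show "integrable lborel (\<lambda>z. indicator (cball 0 r) z *\<^sub>R g z)"
    by (rule borel_integrable_compact) (use assms in auto)
qed (auto simp: indicator_def)

definition disc_monomial_integral :: "real \<Rightarrow> nat \<Rightarrow> nat \<Rightarrow> complex" where
  "disc_monomial_integral r n m = (\<integral>z. indicator (ball 0 r) z *\<^sub>R (z^n * cnj z^m) \<partial>lborel)"

definition disc_moment :: "real \<Rightarrow> nat \<Rightarrow> real" where
  "disc_moment r n = (\<integral>z. indicator (ball 0 r) (z::complex) * norm z ^ (2*n) \<partial>lborel)"

lemma integrable_disc_monomial[simp]:
  "integrable lborel (\<lambda>z::complex. indicator (ball 0 r) z *\<^sub>R (z^n * cnj z^m))"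
  by (rule integrable_indicator_ball_continuous) (auto intro!: continuous_intros)

lemma integrable_disc_moment[simp]:
  "integrable lborel (\<lambda>z::complex. indicator (ball 0 r) z * norm z ^ (2*n))"
  using integrable_indicator_ball_continuous[of r "\<lambda>z::complex. norm z ^ (2*n)"]
  by (auto intro!: continuous_intros)

lemma disc_moment_nonneg: "0 \<le> disc_moment r n"
  unfolding disc_moment_def by (rule integral_nonneg_AE) auto

lemma disc_moment_mono: "r \<le> r' \<Longrightarrow> disc_moment r n \<le> disc_moment r' n"
  unfolding disc_moment_def by (intro integral_mono integrable_disc_moment) (auto simp: indicator_def)

lemma disc_monomial_integral_orthogonal:
  assumes "n \<noteq> m" shows "disc_monomial_integral r n m = 0"
proof -
  \<comment> \<open>Rotating by the angle \<open>\<pi>/|n - m|\<close> multiplies the integrand by \<open>-1\<close>.\<close>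
  define x where "x = pi / real (if n > m then n - m else m - n)"
  have rotation_factor: "cis x ^ n * cnj (cis x) ^ m = -1"
  proof -
    have "cis x ^ n * cnj (cis x) ^ m = cis ((real n - real m) * x)"
      using Complex.DeMoivre[of x n] Complex.DeMoivre[of "-x" m] by (simp add: cis_cnj cis_mult algebra_simps)
    also have "(real n - real m) * x = (if n > m then pi else - pi)"
      using assms by (auto simp: x_def of_nat_diff field_simps)
    finally show ?thesis by (simp add: cis.ctr complex_eq_iff)
  qed
  define f where "f z = indicator (ball 0 r) z *\<^sub>R (z^n * cnj z^m)" for z :: complex
  have [measurable]: "f \<in> borel_measurable borel" unfolding f_def by measurable
  have "f (cis x * z) = (cis x ^ n * cnj (cis x) ^ m) * f z" for z
    by (simp add: f_def indicator_def power_mult_distrib norm_mult)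
  then have "(\<integral>z. f z \<partial>lborel) = - (\<integral>z. f z \<partial>lborel)"
    using lborel_integral_mult_cis[of f x] by (simp add: rotation_factor)
  then show ?thesis by (simp add: disc_monomial_integral_def f_def)
qed

lemma disc_monomial_integral_diag: "disc_monomial_integral r n n = of_real (disc_moment r n)"
proof -
  have "z^n * cnj z^n = of_real (norm z ^ (2*n))" for z :: complex
    by (simp add: power_mult_distrib[symmetric] complex_norm_square[symmetric] power_mult)
  then show ?thesis
    unfolding disc_monomial_integral_def disc_moment_def integral_complex_of_real[symmetric]
    by (simp add: scaleR_conv_of_real)
qed

lemma disc_integral_norm_poly_sq:
  fixes c :: "nat \<Rightarrow> complex"
  shows "(\<integral>z. indicator (ball 0 r) z * norm (\<Sum>n<N. c n * z^n)^2 \<partial>lborel)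
       = (\<Sum>n<N. norm (c n)^2 * disc_moment r n)"
proof -
  have expand: "complex_of_real (indicator (ball 0 r) z * norm (\<Sum>n<N. c n * z^n)^2) =
     (\<Sum>n<N. \<Sum>m<N. (c n * cnj (c m)) * (indicator (ball 0 r) z *\<^sub>R (z^n * cnj z^m)))"
    for z :: complex
  proof -
    have "complex_of_real (norm (\<Sum>n<N. c n * z^n)^2) = (\<Sum>n<N. c n * z^n) * cnj (\<Sum>m<N. c m * z^m)"
      by (rule complex_norm_square)
    also have "\<dots> = (\<Sum>n<N. \<Sum>m<N. (c n * cnj (c m)) * (z^n * cnj z^m))"
      by (simp add: sum_product mult_ac)
    finally show ?thesis
      by (simp add: scaleR_conv_of_real sum_distrib_left sum_distrib_right mult_ac indicator_def)
  qed
  have "complex_of_real (\<integral>z. indicator (ball 0 r) z * norm (\<Sum>n<N. c n * z^n)^2 \<partial>lborel)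
      = (\<Sum>n<N. \<Sum>m<N. (c n * cnj (c m)) * disc_monomial_integral r n m)"
    unfolding integral_complex_of_real[symmetric] expand disc_monomial_integral_def
    by (intro has_bochner_integral_integral_eq has_bochner_integral_sum
        has_bochner_integral_mult_right has_bochner_integral_integrable integrable_disc_monomial)
  also have "\<dots> = (\<Sum>n<N. (c n * cnj (c n)) * disc_monomial_integral r n n)"
    by (intro sum.cong refl, subst sum.remove[of _ n for n])
       (auto simp: disc_monomial_integral_orthogonal intro!: sum.neutral)
  also have "\<dots> = complex_of_real (\<Sum>n<N. norm (c n)^2 * disc_moment r n)"
    by (simp add: disc_monomial_integral_diag complex_norm_square[symmetric])
  finally show ?thesis by (simp only: of_real_eq_iff)
qed

definition pser :: "(nat \<Rightarrow> complex) \<Rightarrow> complex \<Rightarrow> complex" where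
  "pser c z = (\<Sum>n. c n * z ^ n)"

lemma ereal_less_conv_radius: "1 \<le> conv_radius c \<Longrightarrow> x < 1 \<Longrightarrow> ereal x < conv_radius c"
  by (metis less_ereal.simps(1) one_ereal_def order_less_le_trans)

lemma pser_sums:
  assumes "ereal (norm z) < conv_radius c" shows "(\<lambda>n. c n * z^n) sums pser c z"
  unfolding pser_def using summable_in_conv_radius[OF assms] by (simp add: summable_sums)

lemma norm_partial_pser_le:
  fixes c :: "nat \<Rightarrow> complex"
  assumes "ereal r < conv_radius c" "norm z \<le> r"
  shows "norm (\<Sum>n<N. c n * z^n) \<le> (\<Sum>n. norm (c n) * r^n)"
proof -
  have r: "0 \<le> r" using assms(2) norm_ge_zero order_trans by blast
  have "summable (\<lambda>n. norm (c n) * r^n)"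
    using abs_summable_in_conv_radius[of "complex_of_real r" c] assms r
    by (simp add: norm_mult norm_power)
  moreover have "norm (\<Sum>n<N. c n * z^n) \<le> (\<Sum>n<N. norm (c n) * r^n)"
    by (rule order_trans[OF norm_sum sum_mono])
       (auto simp: norm_mult norm_power intro!: mult_left_mono power_mono assms)
  moreover have "(\<Sum>n<N. norm (c n) * r^n) \<le> (\<Sum>n. norm (c n) * r^n)"
    using calculation(1) r by (intro sum_le_suminf) auto
  ultimately show ?thesis by linarith
qed

lemma tendsto_partial_pser_norm_sq_disc:
  assumes "ereal r \<le> conv_radius c"
  shows "(\<lambda>N. indicator (ball 0 r) z * norm (\<Sum>n<N. c n * z^n)^2)
           \<longlonglongrightarrow> indicator (ball 0 r) z * norm (pser c z)^2"
proof (cases "z \<in> ball 0 r")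
  case True
  then have "ereal (norm z) < conv_radius c"
    using assms by (metis less_ereal.simps(1) mem_ball_0 order_less_le_trans)
  then have "(\<lambda>N. \<Sum>n<N. c n * z^n) \<longlonglongrightarrow> pser c z"
    using pser_sums sums_def by blast
  then show ?thesis using True by (simp add: tendsto_intros)
qed simp

lemma borel_measurable_partial_pser_norm_sq_disc[measurable]:
  fixes c :: "nat \<Rightarrow> complex"
  shows "(\<lambda>z. indicator (ball 0 r) z * norm (\<Sum>n<N. c n * z^n)^2) \<in> borel_measurable borel"
proof -
  have "(\<lambda>z::complex. norm (\<Sum>n<N. c n * z^n)^2) \<in> borel_measurable borel"
    by (intro borel_measurable_continuous_onI continuous_intros)
  then show ?thesis by measurable
qed

lemma borel_measurable_pser_norm_sq_disc:
  "ereal r \<le> conv_radius c \<Longrightarrow>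
     (\<lambda>z. indicator (ball 0 r) z * norm (pser c z)^2) \<in> borel_measurable borel"
  by (rule borel_measurable_LIMSEQ_real[OF tendsto_partial_pser_norm_sq_disc]) auto

text \<open>Inside the disc of convergence the partial sums are uniformly bounded, so dominated
  convergence passes Parseval's identity from polynomials to the power series.\<close>

lemma pser_disc_parseval:
  assumes "ereal r < conv_radius c"
  shows "integrable lborel (\<lambda>z. indicator (ball 0 r) z * norm (pser c z)^2)"
    and "(\<lambda>n. norm (c n)^2 * disc_moment r n)
           sums (\<integral>z. indicator (ball 0 r) z * norm (pser c z)^2 \<partial>lborel)"
proof -
  define B where "B = (\<Sum>n. norm (c n) * r^n)"
  have meas: "(\<lambda>z. indicator (ball 0 r) z * norm (pser c z)^2) \<in> borel_measurable lborel"
    using borel_measurable_pser_norm_sq_disc assms by simp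
  have dominant: "integrable lborel (\<lambda>z::complex. indicator (ball 0 r) z * B^2)"
    using emeasure_lborel_ball_finite[of "0::complex" r]
    by (intro integrable_mult_left integrable_real_indicator) auto
  have lim: "AE z in lborel. (\<lambda>N. indicator (ball 0 r) z * norm (\<Sum>n<N. c n * z^n)^2)
               \<longlonglongrightarrow> indicator (ball 0 r) z * norm (pser c z)^2"
    using tendsto_partial_pser_norm_sq_disc assms by (simp add: order_less_imp_le)
  have bound: "AE z in lborel. norm (indicator (ball 0 r) z * norm (\<Sum>n<N. c n * z^n)^2)
                 \<le> indicator (ball 0 r) z * B^2" for N
  proof (rule AE_I2)
    fix z :: complex
    show "norm (indicator (ball 0 r) z * norm (\<Sum>n<N. c n * z^n)^2) \<le> indicator (ball 0 r) z * B^2"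
    proof (cases "z \<in> ball 0 r")
      case True
      then have "norm (\<Sum>n<N. c n * z^n) \<le> B"
        unfolding B_def by (intro norm_partial_pser_le assms) auto
      then show ?thesis using True by (simp add: power_mono)
    qed simp
  qed
  show "integrable lborel (\<lambda>z. indicator (ball 0 r) z * norm (pser c z)^2)"
    by (rule integrable_dominated_convergence[OF meas _ dominant lim bound]) simp
  have "(\<lambda>N. \<integral>z. indicator (ball 0 r) z * norm (\<Sum>n<N. c n * z^n)^2 \<partial>lborel)
          \<longlonglongrightarrow> (\<integral>z. indicator (ball 0 r) z * norm (pser c z)^2 \<partial>lborel)"
    by (rule integral_dominated_convergence[OF meas _ dominant lim bound]) simp
  then show "(\<lambda>n. norm (c n)^2 * disc_moment r n)
               sums (\<integral>z. indicator (ball 0 r) z * norm (pser c z)^2 \<partial>lborel)"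
    by (simp add: sums_def disc_integral_norm_poly_sq)
qed

definition radius_seq :: "nat \<Rightarrow> real" where
  "radius_seq k = 1 - 1 / (real k + 2)"

lemma radius_seq_less_1: "radius_seq k < 1"
  by (auto simp: radius_seq_def field_simps)

lemma radius_seq_mono: "k \<le> l \<Longrightarrow> radius_seq k \<le> radius_seq l"
  by (auto simp: radius_seq_def field_simps)

lemma exists_radius_seq_gt: "norm (z::complex) < 1 \<Longrightarrow> \<exists>k. norm z < radius_seq k"
proof -
  assume z: "norm z < 1"
  obtain k where "1 / (1 - norm z) < real k" using reals_Archimedean2 by blast
  then have "norm z < radius_seq k" using z by (auto simp: radius_seq_def field_simps)
  then show ?thesis ..
qed

lemma nn_integral_unit_disc_SUP:
  fixes G :: "complex \<Rightarrow> real"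
  assumes G: "\<And>z. 0 \<le> G z"
    and meas: "\<And>k. (\<lambda>z. indicator (ball 0 (radius_seq k)) z * G z) \<in> borel_measurable borel"
  shows "(\<integral>\<^sup>+z. ennreal (indicator (ball 0 1) z * G z) \<partial>lborel)
       = (SUP k. \<integral>\<^sup>+z. ennreal (indicator (ball 0 (radius_seq k)) z * G z) \<partial>lborel)"
proof -
  have "(SUP k. ennreal (indicator (ball 0 (radius_seq k)) z * G z))
      = ennreal (indicator (ball 0 1) z * G z)" for z
  proof (cases "norm z < 1")
    case True
    then obtain k where "norm z < radius_seq k" using exists_radius_seq_gt by blast
    then show ?thesis
      using True G[of z] radius_seq_less_1
      by (intro antisym SUP_least SUP_upper2[of k]) (auto simp: indicator_def)
  next
    case False
    then have "z \<notin> ball 0 (radius_seq k)" for k using radius_seq_less_1[of k] by auto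
    then show ?thesis using False by (simp add: indicator_def)
  qed
  then have "(\<integral>\<^sup>+z. ennreal (indicator (ball 0 1) z * G z) \<partial>lborel)
      = (\<integral>\<^sup>+z. (SUP k. ennreal (indicator (ball 0 (radius_seq k)) z * G z)) \<partial>lborel)"
    by simp
  also have "\<dots> = (SUP k. \<integral>\<^sup>+z. ennreal (indicator (ball 0 (radius_seq k)) z * G z) \<partial>lborel)"
  proof (rule nn_integral_monotone_convergence_SUP)
    show "incseq (\<lambda>k z. ennreal (indicator (ball 0 (radius_seq k)) z * G z))"
    proof (intro incseq_SucI le_funI)
      fix k z
      show "ennreal (indicator (ball 0 (radius_seq k)) z * G z)
          \<le> ennreal (indicator (ball 0 (radius_seq (Suc k))) z * G z)"
        using G[of z] radius_seq_mono[of k "Suc k"] by (auto simp: indicator_def intro!: ennreal_leI)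
    qed
  qed (use meas in measurable)
  finally show ?thesis .
qed

definition bergman_weight :: "nat \<Rightarrow> real" where
  "bergman_weight n = disc_moment 1 n"

lemma bergman_weight_nonneg: "0 \<le> bergman_weight n"
  by (simp add: bergman_weight_def disc_moment_nonneg)

lemma ennreal_disc_moment:
  "(\<integral>\<^sup>+z. ennreal (indicator (ball 0 r) z * norm (z::complex) ^ (2*n)) \<partial>lborel)
     = ennreal (disc_moment r n)"
  unfolding disc_moment_def by (rule nn_integral_eq_integral) auto

lemma ennreal_bergman_weight_SUP:
  "ennreal (bergman_weight n) = (SUP k. ennreal (disc_moment (radius_seq k) n))"
  using nn_integral_unit_disc_SUP[of "\<lambda>z. norm z ^ (2*n)"]
  by (simp add: ennreal_disc_moment bergman_weight_def)

lemma pser_unit_disc_parseval: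
  assumes "1 \<le> conv_radius c"
  shows "(\<integral>\<^sup>+z. ennreal (indicator (ball 0 1) z * norm (pser c z)^2) \<partial>lborel)
       = (\<Sum>n. ennreal (norm (c n)^2 * bergman_weight n))"
proof -
  have radius: "ereal (radius_seq k) < conv_radius c" for k
    by (rule ereal_less_conv_radius[OF assms radius_seq_less_1])
  note parseval = pser_disc_parseval[OF radius]
  have "(\<integral>\<^sup>+z. ennreal (indicator (ball 0 1) z * norm (pser c z)^2) \<partial>lborel)
     = (SUP k. \<integral>\<^sup>+z. ennreal (indicator (ball 0 (radius_seq k)) z * norm (pser c z)^2) \<partial>lborel)"
    using radius[THEN less_imp_le]
    by (intro nn_integral_unit_disc_SUP borel_measurable_pser_norm_sq_disc) auto
  also have "\<dots> = (SUP k. \<Sum>n. ennreal (norm (c n)^2 * disc_moment (radius_seq k) n))"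
    using parseval by (simp add: nn_integral_eq_integral suminf_ennreal2 sums_iff disc_moment_nonneg)
  also have "\<dots> = (\<Sum>n. SUP k. ennreal (norm (c n)^2 * disc_moment (radius_seq k) n))"
    by (rule ennreal_suminf_SUP_eq[symmetric])
       (auto simp: incseq_def intro!: ennreal_leI mult_left_mono disc_moment_mono radius_seq_mono)
  also have "\<dots> = (\<Sum>n. ennreal (norm (c n)^2 * bergman_weight n))"
    by (simp add: ennreal_mult disc_moment_nonneg bergman_weight_nonneg SUP_mult_left_ennreal
        ennreal_bergman_weight_SUP)
  finally show ?thesis .
qed

lemma bergman_weight_Suc_le: "bergman_weight (Suc n) \<le> bergman_weight n"
  unfolding bergman_weight_def disc_moment_def
proof (intro integral_mono integrable_disc_moment)
  fix z :: complex
  have "norm z ^ (2 * Suc n) = norm z ^ (2*n) * norm z ^ 2" by (simp add: power_add power2_eq_square)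
  also have "\<dots> \<le> norm z ^ (2*n)" if "norm z < 1"
    using that by (intro mult_left_le) (auto simp: power_le_one)
  finally show "indicator (ball 0 1) z * norm z ^ (2 * Suc n) \<le> indicator (ball 0 1) z * norm z ^ (2*n)"
    by (simp add: indicator_def)
qed

lemma bergman_weight_antimono: "m \<le> n \<Longrightarrow> bergman_weight n \<le> bergman_weight m"
  by (induction n rule: dec_induct) (auto intro: order_trans[OF bergman_weight_Suc_le])

lemma bergman_weight_tendsto_0: "bergman_weight \<longlonglongrightarrow> 0"
proof -
  have "(\<lambda>n. \<integral>z. indicator (ball 0 1) z * norm (z::complex) ^ (2*n) \<partial>lborel)
          \<longlonglongrightarrow> (\<integral>z. (0::real) \<partial>(lborel::complex measure))"
  proof (rule integral_dominated_convergence[where w="indicator (ball 0 1)"])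
    show "integrable lborel (indicator (ball (0::complex) 1) :: complex \<Rightarrow> real)"
      using emeasure_lborel_ball_finite[of "0::complex" 1] by (intro integrable_real_indicator) auto
    show "AE z in lborel. (\<lambda>n. indicator (ball 0 1) z * norm (z::complex) ^ (2*n)) \<longlonglongrightarrow> 0"
    proof (rule AE_I2)
      fix z :: complex
      have "norm z < 1 \<Longrightarrow> (\<lambda>n. (norm z ^ 2) ^ n) \<longlonglongrightarrow> 0"
        by (intro LIMSEQ_power_zero) (auto simp: abs_square_less_1)
      then show "(\<lambda>n. indicator (ball 0 1) z * norm z ^ (2*n)) \<longlonglongrightarrow> 0"
        by (cases "norm z < 1") (auto simp: power_mult)
    qed
  qed (auto simp: indicator_def power_le_one)
  moreover have "bergman_weight = (\<lambda>n. \<integral>z. indicator (ball 0 1) z * norm (z::complex) ^ (2*n) \<partial>lborel)"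
    by (simp add: fun_eq_iff bergman_weight_def disc_moment_def)
  ultimately show ?thesis by simp
qed

lemma bergman_weight_geometric_lower_bound:
  assumes "0 < \<rho>" "\<rho> < 1"
  obtains A where "A > 0" "\<And>n. A * \<rho>^(2*n) \<le> bergman_weight n"
proof -
  define D where "D = ball (0::complex) 1 - cball 0 \<rho>"
  have D: "D \<in> sets lborel" "emeasure lborel D < \<infinity>"
    using emeasure_lborel_ball_finite[of "0::complex" 1] emeasure_mono[of D "ball 0 1" lborel]
    by (auto simp: D_def)
  define c where "c = complex_of_real ((1 + \<rho>) / 2)"
  have "ball c ((1 - \<rho>)/2) \<subseteq> D"
  proof
    fix z assume "z \<in> ball c ((1 - \<rho>)/2)"
    moreover have "norm c = (1 + \<rho>)/2" unfolding c_def norm_of_real using assms by simp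
    ultimately show "z \<in> D"
      using norm_triangle_sub[of c z] norm_triangle_sub[of z c]
      by (auto simp: D_def dist_norm norm_minus_commute)
  qed
  then have "measure lborel (ball c ((1 - \<rho>)/2)) \<le> measure lborel D"
    using D by (intro measure_mono_fmeasurable) (auto simp: fmeasurable_def)
  moreover have "0 < measure lborel (ball c ((1 - \<rho>)/2))"
    using assms content_ball_pos[of "(1 - \<rho>)/2" c] by auto
  ultimately have "0 < measure lborel D" by linarith
  moreover have "measure lborel D * \<rho>^(2*n) \<le> bergman_weight n" for n
  proof -
    have "measure lborel D * \<rho>^(2*n) = (\<integral>z. indicator D z * \<rho>^(2*n) \<partial>lborel)"
      using D by simp
    also have "\<dots> \<le> bergman_weight n"
      unfolding bergman_weight_def disc_moment_def
      using assms D
      by (intro integral_mono integrable_disc_moment integrable_mult_left integrable_real_indicator)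
         (auto simp: D_def indicator_def intro!: power_mono)
    finally show ?thesis .
  qed
  ultimately show ?thesis using that by blast
qed

text \<open>Since the weights decay at most geometrically, square summability against them forces
  radius of convergence at least 1.\<close>

lemma conv_radius_ge_1_if_weighted_summable:
  fixes c :: "nat \<Rightarrow> complex"
  assumes summable: "summable (\<lambda>n. norm (c n)^2 * bergman_weight n)"
  shows "1 \<le> conv_radius c"
proof -
  have "ereal 1 \<le> conv_radius c"
  proof (rule conv_radius_geI_ex')
    fix r :: real assume r: "0 < r" "ereal r < ereal 1"
    define \<rho> where "\<rho> = sqrt r"
    have \<rho>: "0 < \<rho>" "\<rho> < 1" "r < \<rho>"
      using r by (auto simp: \<rho>_def real_less_rsqrt power2_eq_square)
    obtain A where A: "A > 0" "\<And>n. A * \<rho>^(2*n) \<le> bergman_weight n"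
      using bergman_weight_geometric_lower_bound[OF \<rho>(1,2)] by blast
    define S where "S = (\<Sum>n. norm (c n)^2 * bergman_weight n)"
    have coeff_bound: "norm (c n) * \<rho>^n \<le> sqrt (S / A)" for n
    proof -
      have "norm (c n)^2 * (A * \<rho>^(2*n)) \<le> norm (c n)^2 * bergman_weight n"
        using A by (intro mult_left_mono) auto
      also have "\<dots> \<le> S"
        unfolding S_def using summable sum_le_suminf[of _ "{n}"] bergman_weight_nonneg by force
      finally have "(norm (c n) * \<rho>^n)^2 \<le> S / A"
        using A by (simp add: field_simps power_mult_distrib power_mult)
      then show ?thesis by (simp add: real_le_rsqrt)
    qed
    have bound: "norm (c n * complex_of_real r ^ n) \<le> sqrt (S / A) * (r / \<rho>)^n" for n
    proof -
      have "norm (c n * complex_of_real r ^ n) = (norm (c n) * \<rho>^n) * (r / \<rho>)^n"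
        using \<rho> r by (simp add: norm_mult norm_power power_divide)
      also have "\<dots> \<le> sqrt (S / A) * (r / \<rho>)^n"
        using coeff_bound[of n] \<rho> r by (intro mult_right_mono) auto
      finally show ?thesis .
    qed
    have "summable (\<lambda>n. sqrt (S / A) * (r / \<rho>)^n)"
      using \<rho> r by (intro summable_mult summable_geometric) auto
    then have "summable (\<lambda>n. norm (c n * complex_of_real r ^ n))"
      by (rule summable_comparison_test') (simp add: bound)
    then show "summable (\<lambda>n. c n * complex_of_real r ^ n)"
      by (rule summable_norm_cancel)
  qed
  then show ?thesis by (simp add: one_ereal_def)
qed

lemma pser_holomorphic: "1 \<le> conv_radius c \<Longrightarrow> pser c holomorphic_on ball 0 1"
proof -
  assume "1 \<le> conv_radius c"
  then have "ball (0::complex) 1 \<subseteq> eball 0 (fps_conv_radius (Abs_fps c))"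
    using ereal_less_conv_radius by (auto simp: fps_conv_radius_def)
  moreover have "pser c = eval_fps (Abs_fps c)" by (simp add: fun_eq_iff pser_def eval_fps_def)
  ultimately show ?thesis by (simp add: holomorphic_on_eval_fps)
qed

lemma taylor_coeff_sums:
  assumes "f holomorphic_on ball 0 1" "z \<in> ball 0 1"
  shows "(\<lambda>n. taylor_coeff f n * z^n) sums f z"
  using holomorphic_power_series[OF assms] by (simp add: taylor_coeff_def)

lemma conv_radius_taylor_coeff:
  assumes "f holomorphic_on ball 0 1"
  shows "1 \<le> conv_radius (taylor_coeff f)"
proof -
  have "ereal 1 \<le> conv_radius (taylor_coeff f)"
  proof (rule conv_radius_geI_ex')
    fix r :: real assume "0 < r" "ereal r < ereal 1"
    then show "summable (\<lambda>n. taylor_coeff f n * complex_of_real r ^ n)"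
      by (intro sums_summable[OF taylor_coeff_sums[OF assms]]) simp
  qed
  then show ?thesis by (simp add: one_ereal_def)
qed

lemma pser_taylor_coeff:
  "f holomorphic_on ball 0 1 \<Longrightarrow> z \<in> ball 0 1 \<Longrightarrow> pser (taylor_coeff f) z = f z"
  using taylor_coeff_sums by (simp add: pser_def sums_iff)

lemma taylor_coeff_eqI:
  assumes "1 \<le> conv_radius c" "\<And>z. z \<in> ball 0 1 \<Longrightarrow> h z = pser c z"
  shows "taylor_coeff h = c"
proof
  fix n
  have "h has_fps_expansion Abs_fps c"
    unfolding has_fps_expansion_def
  proof
    show "0 < fps_conv_radius (Abs_fps c)"
      using ereal_less_conv_radius[OF assms(1), of 0] by (simp add: fps_conv_radius_def zero_ereal_def)
    have "eventually (\<lambda>z. z \<in> ball (0::complex) 1) (nhds 0)"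
      by (intro eventually_nhds_in_open) auto
    then show "\<forall>\<^sub>F z in nhds 0. eval_fps (Abs_fps c) z = h z"
      by eventually_elim (simp add: assms(2) pser_def eval_fps_def)
  qed
  from fps_nth_fps_expansion[OF this, of n] show "taylor_coeff h n = c n"
    by (simp add: taylor_coeff_def)
qed

lemma pser_has_integral_norm_sq:
  assumes "1 \<le> conv_radius c" "\<And>z. z \<in> ball 0 1 \<Longrightarrow> h z = pser c z"
    and "summable (\<lambda>n. norm (c n)^2 * bergman_weight n)"
  shows "((\<lambda>z. (cmod (h z))^2) has_integral (\<Sum>n. norm (c n)^2 * bergman_weight n)) (ball 0 1)"
proof -
  have "((\<lambda>z. indicator (ball 0 1) z * norm (pser c z)^2)
          has_integral (\<Sum>n. norm (c n)^2 * bergman_weight n)) UNIV"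
  proof (rule nn_integral_has_integral)
    show "(\<lambda>z. indicator (ball 0 1) z * norm (pser c z)^2) \<in> borel_measurable borel"
      using assms(1) borel_measurable_pser_norm_sq_disc[of 1 c] by (simp add: one_ereal_def)
    show "(\<integral>\<^sup>+z. ennreal (indicator (ball 0 1) z * norm (pser c z)^2) \<partial>lborel)
        = ennreal (\<Sum>n. norm (c n)^2 * bergman_weight n)"
      using pser_unit_disc_parseval[OF assms(1)] assms(3)
      by (simp add: suminf_ennreal2 bergman_weight_nonneg)
  qed (use assms(3) in \<open>auto intro!: suminf_nonneg simp: bergman_weight_nonneg\<close>)
  then have "((\<lambda>z. if z \<in> ball 0 1 then (cmod (h z))^2 else 0)
               has_integral (\<Sum>n. norm (c n)^2 * bergman_weight n)) UNIV"
    by (rule has_integral_cong[THEN iffD1, rotated]) (auto simp: indicator_def assms(2))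
  then show ?thesis by (simp only: has_integral_restrict_UNIV)
qed

lemma weighted_summable_if_integrable_norm_sq:
  assumes "1 \<le> conv_radius c" "\<And>z. z \<in> ball 0 1 \<Longrightarrow> h z = pser c z"
    and "(\<lambda>z. (cmod (h z))^2) integrable_on ball 0 1"
  shows "summable (\<lambda>n. norm (c n)^2 * bergman_weight n)"
proof (rule summable_suminf_not_top)
  have "(\<integral>\<^sup>+z. ennreal (indicator (ball 0 1) z * norm (pser c z)^2) \<partial>lborel)
      = integral\<^sup>N lborel (\<lambda>z. indicator (ball 0 1) z * (cmod (h z))^2)"
    by (rule nn_integral_cong) (auto simp: indicator_def assms(2))
  also have "\<dots> = integral (ball 0 1) (\<lambda>z. (cmod (h z))^2)"
    by (rule nn_integral_has_integral_lebesgue) (use assms(3) in auto)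
  finally show "(\<Sum>n. ennreal (norm (c n)^2 * bergman_weight n)) \<noteq> top"
    using pser_unit_disc_parseval[OF assms(1)] by simp
qed (simp add: bergman_weight_nonneg)

section \<open>Orbits of the Collatz map\<close>

definition only_trivial_positive_collatz_cycle :: bool where
  "only_trivial_positive_collatz_cycle \<longleftrightarrow> (\<forall>C. collatz_cycle C \<and> C \<subseteq> {0<..} \<longrightarrow> C = {1, 2})"

lemma collatz_nat_eq: "collatz_nat n = (if even n then n div 2 else (3*n+1) div 2)"
  by (cases "even n") (simp_all add: collatz_nat_def collatz_def zdiv_int[symmetric])

lemma collatz_of_nat: "collatz (int n) = int (collatz_nat n)"
  by (cases "even n") (simp_all add: collatz_def collatz_nat_eq zdiv_int)

lemma collatz_nat_ge_1: "1 \<le> n \<Longrightarrow> 1 \<le> collatz_nat n"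
  by (auto simp: collatz_nat_eq elim!: evenE)

lemma funpow_collatz_nat_ge_1: "1 \<le> n \<Longrightarrow> 1 \<le> (collatz_nat ^^ k) n"
proof (induction k)
  case (Suc k)
  then show ?case using collatz_nat_ge_1[of "(collatz_nat ^^ k) n"] by simp
qed simp

lemma collatz_nat_less_3: "n < 3 \<Longrightarrow> collatz_nat n < 3"
  by (auto simp: collatz_nat_eq less_Suc_eq numeral_3_eq_3)

lemma funpow_collatz_nat_less_3:
  assumes "k \<le> k'" "(collatz_nat ^^ k) n < 3" shows "(collatz_nat ^^ k') n < 3"
  using assms by (induction k' rule: dec_induct) (simp_all add: collatz_nat_less_3)

lemma le_twice_collatz_nat: "n \<le> 2 * collatz_nat n"
  by (auto simp: collatz_nat_eq)

lemma le_funpow_collatz_nat: "n \<le> 2^k * (collatz_nat ^^ k) n"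
proof (induction k arbitrary: n)
  case (Suc k)
  have "n \<le> 2 * collatz_nat n" by (rule le_twice_collatz_nat)
  also have "collatz_nat n \<le> 2^k * (collatz_nat ^^ k) (collatz_nat n)" by (rule Suc.IH)
  finally show ?case by (simp add: funpow_Suc_right del: funpow.simps)
qed simp

lemma funpow_collatz_nat_pow2_dvd: "2^k dvd n \<Longrightarrow> (collatz_nat ^^ k) n = n div 2^k"
proof (induction k arbitrary: n)
  case (Suc k)
  then have "even n" and "2^k dvd n div 2" by (auto simp: dvd_def)
  then show ?case
    using Suc.IH by (simp add: funpow_Suc_right collatz_nat_eq div_mult2_eq del: funpow.simps)
qed simp

lemma collatz_cycle_orbit:
  assumes q: "0 < q" "(collatz_nat ^^ q) x = x"
    and least: "\<And>r. 0 < r \<Longrightarrow> r < q \<Longrightarrow> (collatz_nat ^^ r) x \<noteq> x"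
  shows "collatz_cycle (set (map (\<lambda>i. int ((collatz_nat ^^ i) x)) [0..<q]))"
  unfolding collatz_cycle_def
proof (intro exI conjI allI impI)
  let ?ns = "map (\<lambda>i. int ((collatz_nat ^^ i) x)) [0..<q]"
  show "?ns \<noteq> []" using q by simp
  have "inj_on (\<lambda>i. (collatz_nat ^^ i) x) {0..<q}"
    by (rule inj_on_funpow_least) (use q least in auto)
  then show "distinct ?ns"
    by (simp add: distinct_map inj_on_def)
  fix i assume "i < length ?ns"
  then have i: "i < q" by simp
  have "collatz_nat ((collatz_nat ^^ i) x) = (collatz_nat ^^ ((i + 1) mod q)) x"
  proof (cases "i + 1 = q")
    case True
    then show ?thesis using q(2) by (metis funpow.simps(2) comp_apply Suc_eq_plus1 mod_self funpow_0)
  qed (use i in simp)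
  moreover have "?ns ! i = int ((collatz_nat ^^ i) x)" using i by simp
  moreover have "?ns ! ((i + 1) mod length ?ns) = int ((collatz_nat ^^ ((i + 1) mod q)) x)"
    using q by (simp only: length_map length_upt diff_zero nth_map_upt mod_less_divisor add_0)
  ultimately show "collatz (?ns ! i) = ?ns ! ((i + 1) mod length ?ns)"
    by (simp only: collatz_of_nat)
qed simp

lemma periodic_collatz_point_less_3:
  assumes H: only_trivial_positive_collatz_cycle
    and x: "1 \<le> x" and p: "0 < p" "(collatz_nat ^^ p) x = x"
  shows "x < 3"
proof -
  define q where "q = (LEAST q. 0 < q \<and> (collatz_nat ^^ q) x = x)"
  have q: "0 < q" "(collatz_nat ^^ q) x = x"
    using LeastI[of "\<lambda>q. 0 < q \<and> (collatz_nat ^^ q) x = x" p] p by (auto simp: q_def)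
  have "\<And>r. 0 < r \<Longrightarrow> r < q \<Longrightarrow> (collatz_nat ^^ r) x \<noteq> x"
    using not_less_Least q_def by blast
  note cycle = collatz_cycle_orbit[OF q this]
  have "set (map (\<lambda>i. int ((collatz_nat ^^ i) x)) [0..<q]) \<subseteq> {0<..}"
    using funpow_collatz_nat_ge_1[OF x] by (force simp: Suc_le_eq)
  then have "set (map (\<lambda>i. int ((collatz_nat ^^ i) x)) [0..<q]) = {1, 2}"
    using H cycle by (simp add: only_trivial_positive_collatz_cycle_def)
  moreover have "int x \<in> set (map (\<lambda>i. int ((collatz_nat ^^ i) x)) [0..<q])"
    using q by (force simp: image_iff)
  ultimately show ?thesis by auto
qed

lemma funpow_periodic_or_tendsto_at_top:
  fixes f :: "nat \<Rightarrow> nat"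
  shows "(\<exists>k p. 0 < p \<and> (f ^^ p) ((f ^^ k) x) = (f ^^ k) x)
           \<or> filterlim (\<lambda>k. (f ^^ k) x) at_top sequentially"
proof (rule disjCI)
  let ?orbit = "\<lambda>k. (f ^^ k) x"
  assume "\<not> filterlim ?orbit at_top sequentially"
  then obtain Z where "\<not> eventually (\<lambda>k. Z \<le> ?orbit k) sequentially"
    by (auto simp: filterlim_at_top)
  then have "\<forall>N. \<exists>k\<ge>N. ?orbit k < Z"
    by (auto simp: eventually_sequentially not_le)
  then have "infinite {k. ?orbit k < Z}"
    by (auto simp: infinite_nat_iff_unbounded_le)
  moreover have "finite (?orbit ` {k. ?orbit k < Z})"
    by (rule finite_subset[of _ "{..<Z}"]) auto
  ultimately obtain k0 where "infinite {k \<in> {k. ?orbit k < Z}. ?orbit k = ?orbit k0}"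
    using pigeonhole_infinite by blast
  then have "\<exists>k1>k0. k1 \<in> {k \<in> {k. ?orbit k < Z}. ?orbit k = ?orbit k0}"
    by (simp only: infinite_nat_iff_unbounded)
  then obtain k1 where k1: "k1 > k0" "?orbit k1 = ?orbit k0"
    by blast
  have "(f ^^ (k1 - k0)) (?orbit k0) = ?orbit (k1 - k0 + k0)"
    by (simp only: funpow_add comp_apply)
  then have "(f ^^ (k1 - k0)) (?orbit k0) = ?orbit k0"
    using k1 by simp
  then show "\<exists>k p. 0 < p \<and> (f ^^ p) (?orbit k) = ?orbit k"
    using k1 by (intro exI[of _ k0] exI[of _ "k1 - k0"]) simp
qed

lemma collatz_orbit_dichotomy:
  assumes only_trivial_positive_collatz_cycle and "1 \<le> e"
  shows "(\<exists>k. (collatz_nat ^^ k) e < 3) \<or> filterlim (\<lambda>k. (collatz_nat ^^ k) e) at_top sequentially"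
proof -
  have "(collatz_nat ^^ k) e < 3" if "0 < p" "(collatz_nat ^^ p) ((collatz_nat ^^ k) e) = (collatz_nat ^^ k) e"
    for k p
    by (rule periodic_collatz_point_less_3[OF assms(1) funpow_collatz_nat_ge_1[OF assms(2)] that])
  then show ?thesis
    using funpow_periodic_or_tendsto_at_top[of collatz_nat e] by blast
qed

section \<open>The Collatz operator on Taylor coefficients\<close>

lemma has_sum_sum_fibers:
  fixes g :: "'a \<Rightarrow> 'b::{topological_comm_monoid_add, t3_space}"
  assumes "(g has_sum S) UNIV" and "\<And>m. finite {n. \<phi> n = m}"
  shows "((\<lambda>m. \<Sum>n | \<phi> n = m. g n) has_sum S) UNIV"
proof (rule has_sum_SigmaD)
  have "bij_betw (\<lambda>n. (\<phi> n, n)) UNIV (Sigma UNIV (\<lambda>m. {n. \<phi> n = m}))"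
    by (rule bij_betwI[where g=snd]) auto
  from has_sum_reindex_bij_betw[OF this, of "\<lambda>p. g (snd p)" S] assms(1)
  show "((\<lambda>p. g (snd p)) has_sum S) (Sigma UNIV (\<lambda>m. {n. \<phi> n = m}))" by simp
qed (simp add: has_sum_finiteI assms(2))

lemma finite_funpow_collatz_nat_fiber[simp]: "finite {n. (collatz_nat ^^ k) n = m}"
  by (rule finite_subset[of _ "{..2^k * m}"]) (auto intro: order_trans[OF le_funpow_collatz_nat])

lemma finite_collatz_nat_fiber[simp]: "finite {n. collatz_nat n = m}"
  using finite_funpow_collatz_nat_fiber[of 1 m] by simp

definition collatz_coeffs :: "(nat \<Rightarrow> complex) \<Rightarrow> nat \<Rightarrow> complex" where
  "collatz_coeffs c m = (\<Sum>n | collatz_nat n = m. c n)"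

lemma power_collatz_nat_le_sqrt_power:
  fixes x :: real assumes "0 \<le> x" "x \<le> 1"
  shows "x ^ collatz_nat n \<le> sqrt x ^ n"
proof -
  have "x ^ collatz_nat n = sqrt x ^ (2 * collatz_nat n)"
    using assms by (simp add: power_mult)
  also have "\<dots> \<le> sqrt x ^ n"
    using assms le_twice_collatz_nat[of n] by (intro power_decreasing) auto
  finally show ?thesis .
qed

text \<open>Absolute convergence of \<open>\<Sum> a\<^sub>n z\<^bsup>T(n)\<^esup>\<close> follows from \<open>T(n) \<ge> n/2\<close>; grouping its
  terms by the value of \<open>T(n)\<close> gives the power series with coefficients \<open>collatz_coeffs a\<close>.\<close>

lemma collatz_coeffs_sums:
  assumes "1 \<le> conv_radius a" "norm z < 1"
  shows "(\<lambda>m. collatz_coeffs a m * z^m) sums (\<Sum>n. a n * z ^ collatz_nat n)"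
proof -
  have "ereal (norm (complex_of_real (sqrt (norm z)))) < conv_radius a"
    using assms by (intro ereal_less_conv_radius) simp_all
  from abs_summable_in_conv_radius[OF this]
  have "summable (\<lambda>n. norm (a n) * sqrt (norm z) ^ n)"
    by (simp add: norm_mult norm_power)
  moreover have "norm (norm (a n * z ^ collatz_nat n)) \<le> norm (a n) * sqrt (norm z) ^ n" for n
    using assms power_collatz_nat_le_sqrt_power[of "norm z" n]
    by (simp add: norm_mult norm_power mult_left_mono)
  ultimately have abs_summable: "summable (\<lambda>n. norm (a n * z ^ collatz_nat n))"
    by (rule summable_comparison_test'[where N=0])
  have "((\<lambda>n. a n * z ^ collatz_nat n) has_sum (\<Sum>n. a n * z ^ collatz_nat n)) UNIV"
    by (rule norm_summable_imp_has_sum[OF abs_summable summable_sums[OF summable_norm_cancel[OF abs_summable]]])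
  from has_sum_sum_fibers[OF this finite_collatz_nat_fiber]
  have "((\<lambda>m. \<Sum>n | collatz_nat n = m. a n * z ^ collatz_nat n) has_sum
          (\<Sum>n. a n * z ^ collatz_nat n)) UNIV" .
  moreover have "(\<Sum>n | collatz_nat n = m. a n * z ^ collatz_nat n) = collatz_coeffs a m * z^m" for m
    by (simp add: collatz_coeffs_def sum_distrib_right)
  ultimately show ?thesis
    by (simp add: has_sum_imp_sums)
qed

lemma conv_radius_collatz_coeffs:
  assumes "1 \<le> conv_radius a" shows "1 \<le> conv_radius (collatz_coeffs a)"
proof -
  have "ereal 1 \<le> conv_radius (collatz_coeffs a)"
  proof (rule conv_radius_geI_ex')
    fix r :: real assume "0 < r" "ereal r < ereal 1"
    then show "summable (\<lambda>n. collatz_coeffs a n * complex_of_real r ^ n)"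
      using collatz_coeffs_sums[OF assms, of "complex_of_real r"] by (auto intro: sums_summable)
  qed
  then show ?thesis by (simp add: one_ereal_def)
qed

lemma collatz_op_eq_pser:
  assumes "f holomorphic_on ball 0 1" "z \<in> ball 0 1"
  shows "collatz_op f z = pser (collatz_coeffs (taylor_coeff f)) z"
  using collatz_coeffs_sums[OF conv_radius_taylor_coeff[OF assms(1)], of z] assms(2)
  by (simp add: collatz_op_def pser_def sums_iff)

lemma collatz_op_holomorphic_and_taylor_coeff:
  assumes "f holomorphic_on ball 0 1"
  shows "collatz_op f holomorphic_on ball 0 1"
    and "taylor_coeff (collatz_op f) = collatz_coeffs (taylor_coeff f)"
proof -
  note radius = conv_radius_collatz_coeffs[OF conv_radius_taylor_coeff[OF assms]]
  show "collatz_op f holomorphic_on ball 0 1"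
    using pser_holomorphic[OF radius] by (rule holomorphic_transform) (simp add: collatz_op_eq_pser assms)
  show "taylor_coeff (collatz_op f) = collatz_coeffs (taylor_coeff f)"
    by (rule taylor_coeff_eqI[OF radius]) (simp add: collatz_op_eq_pser assms)
qed

lemma funpow_collatz_op_holomorphic_and_taylor_coeff:
  assumes "f holomorphic_on ball 0 1"
  shows "(collatz_op ^^ N) f holomorphic_on ball 0 1
           \<and> taylor_coeff ((collatz_op ^^ N) f) = (collatz_coeffs ^^ N) (taylor_coeff f)"
  by (induction N) (simp_all add: assms collatz_op_holomorphic_and_taylor_coeff)

lemma funpow_collatz_coeffs: "(collatz_coeffs ^^ k) c m = (\<Sum>n | (collatz_nat ^^ k) n = m. c n)"
proof (induction k arbitrary: c m)
  case 0
  have "{n. n = m} = {m}" by auto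
  then show ?case by simp
next
  case (Suc k)
  have "(collatz_coeffs ^^ Suc k) c m = (\<Sum>j | (collatz_nat ^^ k) j = m. \<Sum>n | collatz_nat n = j. c n)"
    by (simp add: funpow_Suc_right Suc.IH collatz_coeffs_def del: funpow.simps)
  also have "\<dots> = (\<Sum>n\<in>(\<Union>j\<in>{j. (collatz_nat ^^ k) j = m}. {n. collatz_nat n = j}). c n)"
    by (rule sum.UNION_disjoint[symmetric]) auto
  also have "(\<Union>j\<in>{j. (collatz_nat ^^ k) j = m}. {n. collatz_nat n = j}) = {n. (collatz_nat ^^ Suc k) n = m}"
    by (auto simp: funpow_Suc_right simp del: funpow.simps)
  finally show ?case .
qed

section \<open>Energy estimates for coefficient sequences\<close>

definition coeff_energy :: "nat set \<Rightarrow> (nat \<Rightarrow> complex) \<Rightarrow> real" where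
  "coeff_energy A d = (\<Sum>m\<in>A. norm (d m)^2 * bergman_weight m)"

lemma coeff_energy_mono: "finite B \<Longrightarrow> A \<subseteq> B \<Longrightarrow> coeff_energy A d \<le> coeff_energy B d"
  unfolding coeff_energy_def by (intro sum_mono2) (auto simp: bergman_weight_nonneg)

lemma coeff_energy_shift_le_suminf:
  assumes "summable (\<lambda>n. norm (c n)^2 * bergman_weight n)"
  shows "coeff_energy {K..<K + N} c \<le> (\<Sum>i. norm (c (i + K))^2 * bergman_weight (i + K))"
proof -
  have "coeff_energy {K..<K + N} c = (\<Sum>i<N. norm (c (i + K))^2 * bergman_weight (i + K))"
    unfolding coeff_energy_def
    by (simp only: add.commute[of K N] sum.shift_bounds_nat_ivl[of _ 0 K N, simplified] atLeast0LessThan)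
  also have "\<dots> \<le> (\<Sum>i. norm (c (i + K))^2 * bergman_weight (i + K))"
    using summable_ignore_initial_segment[OF assms, of K]
    by (intro sum_le_suminf) (auto simp: bergman_weight_nonneg)
  finally show ?thesis .
qed

lemma norm_sum_sq_le_card:
  fixes x :: "'i \<Rightarrow> 'a::real_normed_vector"
  shows "norm (\<Sum>i\<in>I. x i)^2 \<le> real (card I) * (\<Sum>i\<in>I. norm (x i)^2)"
proof -
  have "norm (\<Sum>i\<in>I. x i)^2 \<le> (\<Sum>i\<in>I. norm (x i))^2"
    by (intro power_mono norm_sum) auto
  also have "\<dots> \<le> (\<Sum>i\<in>I. norm (x i)^2) * real (card I)"
    by (rule sum_squared_le_sum_of_squares)
  finally show ?thesis by (simp add: mult.commute)
qed

lemma norm_sum_sq_le_weighted: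
  fixes x :: "'i \<Rightarrow> 'a::real_normed_vector"
  assumes "\<And>i. i \<in> I \<Longrightarrow> 0 < \<beta> i"
  shows "norm (\<Sum>i\<in>I. x i)^2 \<le> (\<Sum>i\<in>I. 1 / \<beta> i) * (\<Sum>i\<in>I. \<beta> i * norm (x i)^2)"
proof -
  have "norm (\<Sum>i\<in>I. x i)^2 \<le> (\<Sum>i\<in>I. norm (x i))^2"
    by (intro power_mono norm_sum) auto
  also have "(\<Sum>i\<in>I. norm (x i)) = (\<Sum>i\<in>I. (1 / sqrt (\<beta> i)) * (sqrt (\<beta> i) * norm (x i)))"
    using assms by (intro sum.cong) (auto simp: field_simps dest!: assms)
  also have "(\<dots>)^2 \<le> (\<Sum>i\<in>I. (1 / sqrt (\<beta> i))^2) * (\<Sum>i\<in>I. (sqrt (\<beta> i) * norm (x i))^2)"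
    by (rule Cauchy_Schwarz_ineq_sum)
  also have "\<dots> = (\<Sum>i\<in>I. 1 / \<beta> i) * (\<Sum>i\<in>I. \<beta> i * norm (x i)^2)"
    using assms by (intro arg_cong2[where f="(*)"] sum.cong)
                   (auto simp: power_divide power_mult_distrib less_imp_le)
  finally show ?thesis .
qed

lemma sum_power_half_le_2: "finite S \<Longrightarrow> (\<Sum>j\<in>S. (1/2::real)^j) \<le> 2"
proof -
  assume "finite S"
  then have "(\<Sum>j\<in>S. (1/2::real)^j) \<le> (\<Sum>j<Suc (Max (insert 0 S)). (1/2)^j)"
    by (intro sum_mono2) (auto simp: le_imp_less_Suc)
  also have "\<dots> \<le> (\<Sum>j. (1/2::real)^j)"
    by (intro sum_le_suminf summable_geometric) auto
  also have "\<dots> = 2" using suminf_geometric[of "1/2::real"] by simp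
  finally show ?thesis .
qed

lemma coeff_energy_sum_le_card:
  "coeff_energy A (\<lambda>m. \<Sum>i\<in>S. x i m) \<le> real (card S) * (\<Sum>i\<in>S. coeff_energy A (x i))"
proof -
  have "coeff_energy A (\<lambda>m. \<Sum>i\<in>S. x i m)
      \<le> (\<Sum>m\<in>A. real (card S) * (\<Sum>i\<in>S. norm (x i m)^2) * bergman_weight m)"
    unfolding coeff_energy_def
    by (intro sum_mono mult_right_mono norm_sum_sq_le_card) (auto simp: bergman_weight_nonneg)
  also have "\<dots> = real (card S) * (\<Sum>i\<in>S. coeff_energy A (x i))"
    by (simp add: coeff_energy_def sum_distrib_left sum_distrib_right sum.swap[of _ S] mult_ac)
  finally show ?thesis .
qed

lemma coeff_energy_sum_le_geometric:
  assumes "finite S"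
  shows "coeff_energy A (\<lambda>e. \<Sum>j\<in>S. x j e) \<le> 2 * (\<Sum>j\<in>S. 2^j * coeff_energy A (x j))"
proof -
  have "norm (\<Sum>j\<in>S. x j e)^2 \<le> 2 * (\<Sum>j\<in>S. 2^j * norm (x j e)^2)" for e
  proof -
    have "norm (\<Sum>j\<in>S. x j e)^2 \<le> (\<Sum>j\<in>S. (1/2)^j) * (\<Sum>j\<in>S. 2^j * norm (x j e)^2)"
      using norm_sum_sq_le_weighted[of S "\<lambda>j. 2^j"] by (simp add: power_one_over)
    also have "\<dots> \<le> 2 * (\<Sum>j\<in>S. 2^j * norm (x j e)^2)"
      using sum_power_half_le_2[OF assms] by (intro mult_right_mono sum_nonneg) auto
    finally show ?thesis .
  qed
  then have "coeff_energy A (\<lambda>e. \<Sum>j\<in>S. x j e)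
      \<le> (\<Sum>e\<in>A. 2 * (\<Sum>j\<in>S. 2^j * norm (x j e)^2) * bergman_weight e)"
    unfolding coeff_energy_def by (intro sum_mono mult_right_mono) (auto simp: bergman_weight_nonneg)
  also have "\<dots> = 2 * (\<Sum>j\<in>S. 2^j * coeff_energy A (x j))"
    by (simp add: coeff_energy_def sum_distrib_left sum_distrib_right sum.swap[of _ S] mult_ac)
  finally show ?thesis .
qed

lemma coeff_energy_add3_le:
  "coeff_energy A (\<lambda>m. x m + y m + z m) \<le> 3 * (coeff_energy A x + coeff_energy A y + coeff_energy A z)"
proof -
  have "norm (x m + y m + z m)^2 \<le> 3 * (norm (x m)^2 + norm (y m)^2 + norm (z m)^2)" for m
    using norm_sum_sq_le_card[of "\<lambda>i. [x m, y m, z m] ! i" "{0, 1, 2}"]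
    by (simp add: numeral_3_eq_3 add.assoc)
  then have "coeff_energy A (\<lambda>m. x m + y m + z m)
      \<le> (\<Sum>m\<in>A. 3 * (norm (x m)^2 + norm (y m)^2 + norm (z m)^2) * bergman_weight m)"
    unfolding coeff_energy_def by (intro sum_mono mult_right_mono) (auto simp: bergman_weight_nonneg)
  also have "\<dots> = 3 * (coeff_energy A x + coeff_energy A y + coeff_energy A z)"
    by (simp add: coeff_energy_def sum.distrib sum_distrib_left algebra_simps)
  finally show ?thesis .
qed

text \<open>The coefficients of \<open>y(z\<^bsup>2\<^sup>a\<^esup>)\<close>; on them \<open>T\<^sup>a\<close> only halves exponents and restores \<open>y\<close>.\<close>

definition dilate_coeffs :: "nat \<Rightarrow> (nat \<Rightarrow> complex) \<Rightarrow> nat \<Rightarrow> complex" where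
  "dilate_coeffs a y e = (if 2^a dvd e then y (e div 2^a) else 0)"

lemma funpow_collatz_coeffs_dilate:
  assumes "k \<le> a"
  shows "(collatz_coeffs ^^ k) (dilate_coeffs a y) m = dilate_coeffs (a - k) y m"
proof -
  have ka: "2^a = 2^k * (2::nat)^(a-k)" using assms by (simp flip: power_add)
  have other: "dilate_coeffs a y n = 0" if "(collatz_nat ^^ k) n = m" "n \<noteq> 2^k * m" for n
  proof (rule ccontr)
    assume "dilate_coeffs a y n \<noteq> 0"
    then have "2^k dvd n"
      using ka by (auto simp: dilate_coeffs_def split: if_splits intro: dvd_mult_left)
    then show False
      using that funpow_collatz_nat_pow2_dvd by auto
  qed
  have "(collatz_coeffs ^^ k) (dilate_coeffs a y) m = dilate_coeffs a y (2^k * m)"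
    unfolding funpow_collatz_coeffs
    by (subst sum.remove[of _ "2^k * m"])
       (auto simp: funpow_collatz_nat_pow2_dvd other intro!: sum.neutral)
  also have "\<dots> = dilate_coeffs (a - k) y m"
    by (simp add: dilate_coeffs_def ka div_mult2_eq)
  finally show ?thesis .
qed

lemma funpow_collatz_coeffs_dilate_ge:
  assumes "a \<le> k"
  shows "(collatz_coeffs ^^ k) (dilate_coeffs a y) = (collatz_coeffs ^^ (k - a)) y"
proof -
  have "(collatz_coeffs ^^ a) (dilate_coeffs a y) = y"
    by (rule ext) (simp add: funpow_collatz_coeffs_dilate dilate_coeffs_def)
  then show ?thesis
    using assms by (metis funpow_add le_add_diff_inverse2 comp_apply)
qed

lemma coeff_energy_dilate_le:
  assumes supp: "\<And>m. y m \<noteq> 0 \<Longrightarrow> 3 \<le> m \<and> m < D"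
  shows "coeff_energy {..<M} (dilate_coeffs a y) \<le> (\<Sum>m<D. norm (y m)^2) * bergman_weight (3 * 2^a)"
proof -
  let ?S = "{m. 2^a * m < M}"
  have "finite ?S"
    by (rule finite_subset[of _ "{..<M}"]) (auto intro: order_le_less_trans[rotated])
  have "coeff_energy {..<M} (dilate_coeffs a y)
      = (\<Sum>m\<in>{m\<in>{..<M}. 2^a dvd m}. norm (y (m div 2^a))^2 * bergman_weight m)"
    unfolding coeff_energy_def dilate_coeffs_def by (rule sum.mono_neutral_cong_right) auto
  also have "{m\<in>{..<M}. 2^a dvd m} = (\<lambda>m'. 2^a * m') ` ?S" by (auto simp: dvd_def)
  also have "(\<Sum>m\<in>(\<lambda>m'. 2^a * m') ` ?S. norm (y (m div 2^a))^2 * bergman_weight m)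
      = (\<Sum>m'\<in>?S. norm (y m')^2 * bergman_weight (2^a * m'))"
    by (subst sum.reindex) (auto simp: inj_on_def)
  also have "\<dots> \<le> (\<Sum>m'\<in>?S \<inter> {..<D}. norm (y m')^2 * bergman_weight (3 * 2^a))"
  proof -
    have "norm (y m')^2 * bergman_weight (2^a * m') \<le> norm (y m')^2 * bergman_weight (3 * 2^a)" for m'
    proof (cases "y m' = 0")
      case False
      then have "3 * 2^a \<le> 2^a * m'" using supp by simp
      then show ?thesis by (intro mult_left_mono bergman_weight_antimono) auto
    qed simp
    then have "(\<Sum>m'\<in>?S. norm (y m')^2 * bergman_weight (2^a * m'))
        \<le> (\<Sum>m'\<in>?S. norm (y m')^2 * bergman_weight (3 * 2^a))"
      by (rule sum_mono)
    also have "\<dots> = (\<Sum>m'\<in>?S \<inter> {..<D}. norm (y m')^2 * bergman_weight (3 * 2^a))"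
      using \<open>finite ?S\<close> by (intro sum.mono_neutral_right) (auto dest: supp)
    finally show ?thesis .
  qed
  also have "\<dots> \<le> (\<Sum>m'<D. norm (y m')^2 * bergman_weight (3 * 2^a))"
    by (intro sum_mono2) (auto simp: bergman_weight_nonneg)
  finally show ?thesis by (simp add: sum_distrib_right)
qed

definition escape_bound :: "nat \<Rightarrow> (nat \<Rightarrow> complex) \<Rightarrow> nat \<Rightarrow> real" where
  "escape_bound D y k = real D * (\<Sum>e<D. norm (y e)^2 *
     (if 3 \<le> (collatz_nat ^^ k) e then bergman_weight ((collatz_nat ^^ k) e) else 0))"

lemma coeff_energy_funpow_collatz_coeffs_le:
  assumes supp: "\<And>e. y e \<noteq> 0 \<Longrightarrow> e < D"
  shows "coeff_energy {3..<M} ((collatz_coeffs ^^ k) y) \<le> escape_bound D y k"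
proof -
  let ?g = "collatz_nat ^^ k"
  let ?fiber = "\<lambda>m. {e\<in>{..<D}. ?g e = m}"
  define h where "h e = norm (y e)^2 * (if 3 \<le> ?g e then bergman_weight (?g e) else 0)" for e
  have h: "0 \<le> h e" for e by (simp add: h_def bergman_weight_nonneg)
  have term_le: "norm ((collatz_coeffs ^^ k) y m)^2 * bergman_weight m \<le> real D * (\<Sum>e\<in>?fiber m. h e)"
    if "3 \<le> m" for m
  proof -
    have "(collatz_coeffs ^^ k) y m = (\<Sum>e\<in>?fiber m. y e)"
      unfolding funpow_collatz_coeffs by (rule sum.mono_neutral_cong_right) (auto dest: supp)
    then have "norm ((collatz_coeffs ^^ k) y m)^2 \<le> real (card (?fiber m)) * (\<Sum>e\<in>?fiber m. norm (y e)^2)"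
      using norm_sum_sq_le_card by metis
    also have "\<dots> \<le> real D * (\<Sum>e\<in>?fiber m. norm (y e)^2)"
      using card_mono[of "{..<D}" "?fiber m"] by (intro mult_right_mono sum_nonneg) auto
    finally have "norm ((collatz_coeffs ^^ k) y m)^2 * bergman_weight m
        \<le> real D * (\<Sum>e\<in>?fiber m. norm (y e)^2) * bergman_weight m"
      by (rule mult_right_mono) (simp add: bergman_weight_nonneg)
    also have "\<dots> = real D * (\<Sum>e\<in>?fiber m. h e)"
      using that by (simp add: h_def sum_distrib_right mult.assoc)
    finally show ?thesis .
  qed
  have "coeff_energy {3..<M} ((collatz_coeffs ^^ k) y) \<le> (\<Sum>m\<in>{3..<M}. real D * (\<Sum>e\<in>?fiber m. h e))"
    unfolding coeff_energy_def by (intro sum_mono term_le) auto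
  also have "\<dots> \<le> real D * (\<Sum>m\<in>{3..<M} \<union> ?g ` {..<D}. \<Sum>e\<in>?fiber m. h e)"
    by (simp add: sum_distrib_left) (intro sum_mono2 mult_nonneg_nonneg sum_nonneg h, auto)
  also have "(\<Sum>m\<in>{3..<M} \<union> ?g ` {..<D}. \<Sum>e\<in>?fiber m. h e) = (\<Sum>e<D. h e)"
    by (rule sum.group) auto
  finally show ?thesis by (simp add: escape_bound_def h_def)
qed

lemma collatz_orbit_weight_tendsto_0:
  assumes only_trivial_positive_collatz_cycle "1 \<le> e"
  shows "(\<lambda>k. if 3 \<le> (collatz_nat ^^ k) e then bergman_weight ((collatz_nat ^^ k) e) else 0) \<longlonglongrightarrow> 0"
  using collatz_orbit_dichotomy[OF assms]
proof
  assume "\<exists>k. (collatz_nat ^^ k) e < 3"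
  then obtain k0 where "(collatz_nat ^^ k0) e < 3" by blast
  then have "(collatz_nat ^^ k) e < 3" if "k0 \<le> k" for k
    using funpow_collatz_nat_less_3 that by blast
  then have "eventually (\<lambda>k. (if 3 \<le> (collatz_nat ^^ k) e then bergman_weight ((collatz_nat ^^ k) e) else 0) = 0)
               sequentially"
    by (intro eventually_sequentiallyI[of k0]) (metis not_le)
  then show ?thesis by (rule tendsto_eventually)
next
  assume "filterlim (\<lambda>k. (collatz_nat ^^ k) e) at_top sequentially"
  then have "(\<lambda>k. bergman_weight ((collatz_nat ^^ k) e)) \<longlonglongrightarrow> 0"
    by (rule filterlim_compose[OF bergman_weight_tendsto_0])
  from tendsto_sandwich[OF _ _ tendsto_const this] show ?thesis
    by (auto simp: bergman_weight_nonneg)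
qed

lemma escape_bound_tendsto_0:
  assumes only_trivial_positive_collatz_cycle and supp: "\<And>e. y e \<noteq> 0 \<Longrightarrow> 1 \<le> e"
  shows "escape_bound D y \<longlonglongrightarrow> 0"
proof -
  have "(\<lambda>k. norm (y e)^2 * (if 3 \<le> (collatz_nat ^^ k) e then bergman_weight ((collatz_nat ^^ k) e) else 0))
          \<longlonglongrightarrow> 0" for e
  proof (cases "y e = 0")
    case False
    show ?thesis
      by (rule tendsto_mult_right_zero[OF collatz_orbit_weight_tendsto_0[OF assms(1) supp[OF False]]])
  qed simp
  then have "(\<lambda>k. real D * (\<Sum>e<D. norm (y e)^2 *
      (if 3 \<le> (collatz_nat ^^ k) e then bergman_weight ((collatz_nat ^^ k) e) else 0))) \<longlonglongrightarrow> real D * 0"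
    by (intro tendsto_mult tendsto_const) (simp add: tendsto_null_sum)
  then show ?thesis by (simp add: escape_bound_def[abs_def])
qed

definition gauss_rat_coeffs :: "(rat \<times> rat) list \<Rightarrow> nat \<Rightarrow> complex" where
  "gauss_rat_coeffs L m =
     (if 3 \<le> m \<and> m - 3 < length L
      then Complex (of_rat (fst (L ! (m - 3)))) (of_rat (snd (L ! (m - 3)))) else 0)"

lemma gauss_rat_coeffs_nonzero_imp: "gauss_rat_coeffs L m \<noteq> 0 \<Longrightarrow> 3 \<le> m \<and> m < 3 + length L"
  by (auto simp: gauss_rat_coeffs_def split: if_splits)

lemma exists_gauss_rat_near:
  assumes "0 < \<epsilon>"
  obtains q :: "rat \<times> rat" where "norm (z - Complex (of_rat (fst q)) (of_rat (snd q))) < \<epsilon>"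
proof -
  obtain a where a: "a \<in> \<rat>" "Re z - \<epsilon>/2 < a" "a < Re z"
    using Rats_dense_in_real[of "Re z - \<epsilon>/2" "Re z"] assms by auto
  obtain b where b: "b \<in> \<rat>" "Im z - \<epsilon>/2 < b" "b < Im z"
    using Rats_dense_in_real[of "Im z - \<epsilon>/2" "Im z"] assms by auto
  obtain a' b' where "a = of_rat a'" "b = of_rat b'"
    using a(1) b(1) Rats_cases by metis
  moreover have "norm (z - Complex a b) < \<epsilon>"
    using cmod_le[of "z - Complex a b"] a b by simp
  ultimately show ?thesis using that[of "(a', b')"] by simp
qed

lemma gauss_rat_coeffs_dense:
  assumes summable: "summable (\<lambda>n. norm (c n)^2 * bergman_weight n)" and "0 < \<delta>"
  obtains L where "\<And>M. coeff_energy {3..<M} (\<lambda>m. gauss_rat_coeffs L m - c m) \<le> \<delta>"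
proof -
  obtain K0 where K0: "\<forall>n\<ge>K0. norm (\<Sum>i. norm (c (i + n))^2 * bergman_weight (i + n)) < \<delta>/2"
    using suminf_exist_split[OF _ summable, of "\<delta>/2"] \<open>0 < \<delta>\<close> by auto
  define K where "K = K0 + 3"
  have "norm (\<Sum>i. norm (c (i + K))^2 * bergman_weight (i + K)) < \<delta>/2"
    using K0 by (simp add: K_def)
  then have K: "3 \<le> K" "(\<Sum>i. norm (c (i + K))^2 * bergman_weight (i + K)) < \<delta>/2"
    by (auto simp: K_def dest: order_le_less_trans[OF abs_ge_self])
  define \<epsilon> where "\<epsilon> = sqrt (\<delta> / (2 * real K * (bergman_weight 0 + 1)))"
  have "0 < \<epsilon>"
    using \<open>0 < \<delta>\<close> K(1) bergman_weight_nonneg[of 0] by (simp add: \<epsilon>_def)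
  then have "\<forall>m. \<exists>q. norm (c m - Complex (of_rat (fst q)) (of_rat (snd q))) < \<epsilon>"
    using exists_gauss_rat_near by metis
  then obtain q where q: "\<And>m. norm (c m - Complex (of_rat (fst (q m))) (of_rat (snd (q m)))) < \<epsilon>"
    by metis
  define L where "L = map (\<lambda>i. q (i + 3)) [0..<K - 3]"
  define d where "d m = gauss_rat_coeffs L m - c m" for m
  have head: "norm (d m)^2 * bergman_weight m \<le> \<delta> / (2 * real K)" if "m \<in> {3..<K}" for m
  proof -
    have "norm (d m) \<le> \<epsilon>"
      using q[of m] that by (auto simp: d_def gauss_rat_coeffs_def L_def norm_minus_commute)
    then have "norm (d m)^2 * bergman_weight m \<le> \<epsilon>^2 * (bergman_weight 0 + 1)"
      using bergman_weight_antimono[of 0 m]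
      by (intro mult_mono power_mono) (auto simp: bergman_weight_nonneg)
    also have "\<dots> = \<delta> / (2 * real K)"
      using \<open>0 < \<delta>\<close> K(1) bergman_weight_nonneg[of 0] by (simp add: \<epsilon>_def)
    finally show ?thesis .
  qed
  have tail: "coeff_energy {K..<K + N} d \<le> (\<Sum>i. norm (c (i + K))^2 * bergman_weight (i + K))" for N
  proof -
    have "coeff_energy {K..<K + N} d = coeff_energy {K..<K + N} c"
      unfolding coeff_energy_def by (intro sum.cong) (auto simp: d_def gauss_rat_coeffs_def L_def)
    then show ?thesis using coeff_energy_shift_le_suminf[OF summable] by simp
  qed
  have "coeff_energy {3..<K} d \<le> real (card {3..<K}) * (\<delta> / (2 * real K))"
    unfolding coeff_energy_def by (intro sum_bounded_above head)
  also have "\<dots> \<le> \<delta> / 2"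
    using \<open>0 < \<delta>\<close> K(1) by (simp add: field_simps)
  finally have head_energy: "coeff_energy {3..<K} d \<le> \<delta> / 2" .
  have "coeff_energy {3..<M} d \<le> \<delta>" for M
  proof -
    have "coeff_energy {3..<M} d \<le> coeff_energy ({3..<K} \<union> {K..<K + M}) d"
      by (intro coeff_energy_mono) auto
    also have "\<dots> = coeff_energy {3..<K} d + coeff_energy {K..<K + M} d"
      unfolding coeff_energy_def by (rule sum.union_disjoint) auto
    finally show ?thesis using head_energy tail[of M] K(2) by linarith
  qed
  then show ?thesis by (intro that[of L]) (simp add: d_def[abs_def])
qed

section \<open>A universal coefficient sequence\<close>

text \<open>Every list of Gaussian rationals is \<open>target_list j\<close> for arbitrarily large \<open>j\<close>.\<close>

definition target_list :: "nat \<Rightarrow> (rat \<times> rat) list" where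
  "target_list j = from_nat (fst (prod_decode j))"

definition target :: "nat \<Rightarrow> nat \<Rightarrow> complex" where
  "target j = gauss_rat_coeffs (target_list j)"

definition target_length :: "nat \<Rightarrow> nat" where
  "target_length j = 3 + length (target_list j)"

definition target_norm_sq :: "nat \<Rightarrow> real" where
  "target_norm_sq j = (\<Sum>m<target_length j. norm (target j m)^2)"

definition tolerance :: "nat \<Rightarrow> real" where
  "tolerance j = 1 / (real j + 1)^3"

definition settling_time :: "nat \<Rightarrow> real \<Rightarrow> nat" where
  "settling_time i \<eta> = (LEAST K. \<forall>k\<ge>K. escape_bound (target_length i) (target i) k \<le> \<eta>)"

definition dilation_threshold :: "nat \<Rightarrow> nat" where
  "dilation_threshold j =
     (LEAST a. \<forall>b\<ge>a. 2^j * target_norm_sq j * bergman_weight (3 * 2^b) \<le> (1/4)^j)"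

definition stage_gap :: "nat \<Rightarrow> nat" where
  "stage_gap j = 1 + dilation_threshold j + (\<Sum>i<j. settling_time i (tolerance j))"

definition stage :: "nat \<Rightarrow> nat" where
  "stage j = (\<Sum>i\<le>j. stage_gap i)"

text \<open>The coefficients of \<open>\<Sum>\<^sub>j y\<^sub>j(z\<^bsup>2\<^bsup>stage j\<^esup>\<^esup>)\<close> with \<open>y\<^sub>j = target j\<close>; the \<open>j\<close>-th block starts
  at degree \<open>3 \<cdot> 2\<^bsup>stage j\<^esup> > j\<close>, so only \<open>j \<le> e\<close> contribute to degree \<open>e\<close>.\<close>

definition universal_coeffs :: "nat \<Rightarrow> complex" where
  "universal_coeffs e = (\<Sum>j\<le>e. dilate_coeffs (stage j) (target j) e)"

lemma target_nonzero_imp: "target j m \<noteq> 0 \<Longrightarrow> 3 \<le> m \<and> m < target_length j"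
  using gauss_rat_coeffs_nonzero_imp by (auto simp: target_def target_length_def)

lemma target_target_list_encode: "target (prod_encode (to_nat L, k)) = gauss_rat_coeffs L"
  by (simp add: target_def target_list_def)

lemma stage_Suc: "stage (Suc j) = stage j + stage_gap (Suc j)"
  by (simp add: stage_def)

lemma stage_gap_le_stage: "stage_gap j \<le> stage j"
  unfolding stage_def by (rule member_le_sum) auto

lemma stage_add_stage_gap_le: "i < j \<Longrightarrow> stage i + stage_gap j \<le> stage j"
proof (induction j)
  case (Suc j)
  then show ?case by (cases "i = j") (auto simp: stage_Suc)
qed simp

lemma stage_mono: "i \<le> j \<Longrightarrow> stage i \<le> stage j"
  using stage_add_stage_gap_le[of i j] by (cases "i = j") auto

lemma less_stage: "j < stage j"
  by (induction j) (auto simp: stage_def stage_gap_def)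

lemma dilate_target_nonzero_imp:
  assumes "dilate_coeffs (stage j) (target j) e \<noteq> 0" shows "j < e"
proof -
  from assms have "2^stage j dvd e" and "target j (e div 2^stage j) \<noteq> 0"
    by (auto simp: dilate_coeffs_def split: if_splits)
  then have "3 * 2^stage j \<le> e"
    using target_nonzero_imp by (metis dvd_div_mult_self mult_le_mono1)
  then show ?thesis
    using less_exp[of "stage j"] less_stage[of j] by linarith
qed

lemma universal_coeffs_eq_sum:
  "finite S \<Longrightarrow> {..e} \<subseteq> S \<Longrightarrow> universal_coeffs e = (\<Sum>j\<in>S. dilate_coeffs (stage j) (target j) e)"
  unfolding universal_coeffs_def
  by (rule sum.mono_neutral_left) (auto dest: dilate_target_nonzero_imp)

lemma escape_bound_settling_time:
  assumes only_trivial_positive_collatz_cycle "0 < \<eta>" "settling_time i \<eta> \<le> k"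
  shows "escape_bound (target_length i) (target i) k \<le> \<eta>"
proof -
  have "escape_bound (target_length i) (target i) \<longlonglongrightarrow> 0"
    by (rule escape_bound_tendsto_0[OF assms(1)]) (use target_nonzero_imp in force)
  then have "eventually (\<lambda>k. escape_bound (target_length i) (target i) k < \<eta>) sequentially"
    using assms(2) by (rule order_tendstoD)
  then have "\<exists>K. \<forall>k\<ge>K. escape_bound (target_length i) (target i) k \<le> \<eta>"
    by (auto simp: eventually_sequentially intro: less_imp_le)
  then have "\<forall>k\<ge>settling_time i \<eta>. escape_bound (target_length i) (target i) k \<le> \<eta>"
    unfolding settling_time_def by (rule LeastI_ex)
  then show ?thesis using assms(3) by blast
qed

lemma dilation_threshold_le:
  assumes "dilation_threshold j \<le> b"
  shows "2^j * target_norm_sq j * bergman_weight (3 * 2^b) \<le> (1/4)^j"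
proof -
  have "(\<lambda>b. bergman_weight (3 * 2^b)) \<longlonglongrightarrow> 0"
  proof (rule tendsto_sandwich[OF _ _ tendsto_const bergman_weight_tendsto_0])
    have "b \<le> 3 * 2^b" for b :: nat
      using less_exp[of b] by linarith
    then show "eventually (\<lambda>b. bergman_weight (3 * 2^b) \<le> bergman_weight b) sequentially"
      by (intro always_eventually allI bergman_weight_antimono)
  qed (simp add: bergman_weight_nonneg)
  then have "(\<lambda>b. 2^j * target_norm_sq j * bergman_weight (3 * 2^b)) \<longlonglongrightarrow> 2^j * target_norm_sq j * 0"
    by (intro tendsto_mult tendsto_const)
  then have "eventually (\<lambda>b. 2^j * target_norm_sq j * bergman_weight (3 * 2^b) < (1/4)^j) sequentially"
    by (intro order_tendstoD) auto
  then have "\<exists>a. \<forall>b\<ge>a. 2^j * target_norm_sq j * bergman_weight (3 * 2^b) \<le> (1/4)^j"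
    by (auto simp: eventually_sequentially intro: less_imp_le)
  then have "\<forall>b\<ge>dilation_threshold j. 2^j * target_norm_sq j * bergman_weight (3 * 2^b) \<le> (1/4)^j"
    unfolding dilation_threshold_def by (rule LeastI_ex)
  then show ?thesis using assms by blast
qed

lemma coeff_energy_dilate_target_le:
  "2^j * coeff_energy {..<M} (dilate_coeffs a (target j)) \<le> (1/4)^j" if "dilation_threshold j \<le> a"
proof -
  have "2^j * coeff_energy {..<M} (dilate_coeffs a (target j))
      \<le> 2^j * (target_norm_sq j * bergman_weight (3 * 2^a))"
    unfolding target_norm_sq_def
    by (intro mult_left_mono coeff_energy_dilate_le) (auto dest: target_nonzero_imp)
  also have "\<dots> \<le> (1/4)^j"
    using dilation_threshold_le[OF that] by (simp add: mult_ac)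
  finally show ?thesis .
qed

lemma universal_coeffs_weighted_summable:
  "summable (\<lambda>n. norm (universal_coeffs n)^2 * bergman_weight n)"
proof (rule summableI_nonneg_bounded)
  fix M
  have "universal_coeffs e = (\<Sum>j<M. dilate_coeffs (stage j) (target j) e)" if "e < M" for e
    by (rule universal_coeffs_eq_sum) (use that in auto)
  then have "coeff_energy {..<M} universal_coeffs
      = coeff_energy {..<M} (\<lambda>e. \<Sum>j<M. dilate_coeffs (stage j) (target j) e)"
    unfolding coeff_energy_def by simp
  also have "\<dots> \<le> 2 * (\<Sum>j<M. 2^j * coeff_energy {..<M} (dilate_coeffs (stage j) (target j)))"
    by (rule coeff_energy_sum_le_geometric) simp
  also have "\<dots> \<le> 2 * (\<Sum>j<M. (1/2::real)^j)"
  proof (intro mult_left_mono sum_mono)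
    fix j
    have "dilation_threshold j \<le> stage j"
      using stage_gap_le_stage[of j] by (simp add: stage_gap_def)
    then have "2^j * coeff_energy {..<M} (dilate_coeffs (stage j) (target j)) \<le> (1/4)^j"
      by (rule coeff_energy_dilate_target_le)
    also have "\<dots> \<le> (1/2)^j" by (intro power_mono) auto
    finally show "2^j * coeff_energy {..<M} (dilate_coeffs (stage j) (target j)) \<le> (1/2)^j" .
  qed auto
  also have "\<dots> \<le> 4" using sum_power_half_le_2[of "{..<M}"] by simp
  finally show "(\<Sum>n<M. norm (universal_coeffs n)^2 * bergman_weight n) \<le> 4"
    by (simp add: coeff_energy_def)
qed (simp add: bergman_weight_nonneg)

lemma funpow_collatz_coeffs_universal_coeffs_split:
  assumes "m < M"
  shows "(collatz_coeffs ^^ stage J) universal_coeffs m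
       = (\<Sum>i<J. (collatz_coeffs ^^ (stage J - stage i)) (target i) m) + target J m
         + (\<Sum>j\<in>{J<..2^stage J * M}. dilate_coeffs (stage j - stage J) (target j) m)"
proof -
  let ?N = "stage J" and ?R = "2^stage J * M"
  let ?Z = "\<lambda>j. dilate_coeffs (stage j) (target j)"
  have split: "universal_coeffs e = (\<Sum>j<J. ?Z j e) + ?Z J e + (\<Sum>j\<in>{J<..?R}. ?Z j e)"
    if "(collatz_nat ^^ ?N) e = m" for e
  proof -
    have "e \<le> ?R"
      using le_funpow_collatz_nat[of e ?N] that assms by (simp add: order_trans)
    then have "universal_coeffs e = (\<Sum>j\<in>{..<J} \<union> {J} \<union> {J<..?R}. ?Z j e)"
      by (intro universal_coeffs_eq_sum) auto
    also have "\<dots> = (\<Sum>j<J. ?Z j e) + ?Z J e + (\<Sum>j\<in>{J<..?R}. ?Z j e)"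
      by (subst sum.union_disjoint, auto)+
    finally show ?thesis .
  qed
  have "(collatz_coeffs ^^ ?N) universal_coeffs m
      = (\<Sum>j<J. (collatz_coeffs ^^ ?N) (?Z j) m) + (collatz_coeffs ^^ ?N) (?Z J) m
        + (\<Sum>j\<in>{J<..?R}. (collatz_coeffs ^^ ?N) (?Z j) m)"
    by (simp add: funpow_collatz_coeffs split sum.distrib sum.swap[of _ "{n. (collatz_nat ^^ ?N) n = m}"])
  also have "(\<Sum>j<J. (collatz_coeffs ^^ ?N) (?Z j) m)
      = (\<Sum>i<J. (collatz_coeffs ^^ (?N - stage i)) (target i) m)"
    by (intro sum.cong refl) (simp add: funpow_collatz_coeffs_dilate_ge stage_mono)
  also have "(collatz_coeffs ^^ ?N) (?Z J) m = target J m"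
    by (simp add: funpow_collatz_coeffs_dilate_ge)
  also have "(\<Sum>j\<in>{J<..?R}. (collatz_coeffs ^^ ?N) (?Z j) m)
      = (\<Sum>j\<in>{J<..?R}. dilate_coeffs (stage j - ?N) (target j) m)"
    by (intro sum.cong refl) (simp add: funpow_collatz_coeffs_dilate stage_mono)
  finally show ?thesis .
qed

text \<open>Blocks placed before stage \<open>J\<close> have had at least \<open>stage_gap J\<close> Collatz steps to escape.\<close>

lemma coeff_energy_early_blocks_le:
  assumes only_trivial_positive_collatz_cycle
  shows "coeff_energy {3..<M} (\<lambda>m. \<Sum>i<J. (collatz_coeffs ^^ (stage J - stage i)) (target i) m)
           \<le> real J * real J * tolerance J"
proof -
  have "coeff_energy {3..<M} ((collatz_coeffs ^^ (stage J - stage i)) (target i)) \<le> tolerance J"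
    if "i < J" for i
  proof -
    have "settling_time i (tolerance J) \<le> (\<Sum>i<J. settling_time i (tolerance J))"
      using that by (intro member_le_sum) auto
    also have "\<dots> \<le> stage_gap J" by (simp add: stage_gap_def)
    also have "stage_gap J \<le> stage J - stage i"
      using stage_add_stage_gap_le[OF that] by simp
    finally have "escape_bound (target_length i) (target i) (stage J - stage i) \<le> tolerance J"
      by (intro escape_bound_settling_time assms) (auto simp: tolerance_def)
    moreover have "coeff_energy {3..<M} ((collatz_coeffs ^^ (stage J - stage i)) (target i))
        \<le> escape_bound (target_length i) (target i) (stage J - stage i)"
      by (rule coeff_energy_funpow_collatz_coeffs_le) (use target_nonzero_imp in blast)
    ultimately show ?thesis by linarith
  qed
  then have "(\<Sum>i<J. coeff_energy {3..<M} ((collatz_coeffs ^^ (stage J - stage i)) (target i)))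
      \<le> real (card {..<J}) * tolerance J"
    by (intro sum_bounded_above) auto
  then have "real J * (\<Sum>i<J. coeff_energy {3..<M} ((collatz_coeffs ^^ (stage J - stage i)) (target i)))
      \<le> real J * (real J * tolerance J)"
    by (intro mult_left_mono) auto
  then show ?thesis
    using coeff_energy_sum_le_card[of "{3..<M}" "\<lambda>i. (collatz_coeffs ^^ (stage J - stage i)) (target i)" "{..<J}"]
    by simp
qed

text \<open>Blocks placed after stage \<open>J\<close> are still dilated, so their energy lies in high degrees.\<close>

lemma coeff_energy_late_blocks_le:
  "coeff_energy {..<M} (\<lambda>m. \<Sum>j\<in>{J<..R}. dilate_coeffs (stage j - stage J) (target j) m)
     \<le> 4 * (1/2)^J"
proof -
  have "coeff_energy {..<M} (\<lambda>m. \<Sum>j\<in>{J<..R}. dilate_coeffs (stage j - stage J) (target j) m)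
      \<le> 2 * (\<Sum>j\<in>{J<..R}. 2^j * coeff_energy {..<M} (dilate_coeffs (stage j - stage J) (target j)))"
    by (rule coeff_energy_sum_le_geometric) simp
  also have "\<dots> \<le> 2 * (\<Sum>j\<in>{J<..R}. (1/2)^J * (1/2)^j)"
  proof (intro mult_left_mono sum_mono)
    fix j assume j: "j \<in> {J<..R}"
    have "dilation_threshold j \<le> stage j - stage J"
      using stage_add_stage_gap_le[of J j] j by (simp add: stage_gap_def)
    then have "2^j * coeff_energy {..<M} (dilate_coeffs (stage j - stage J) (target j)) \<le> (1/4)^j"
      by (rule coeff_energy_dilate_target_le)
    also have "(1/4::real)^j = (1/2)^j * (1/2)^j"
      by (simp add: power_mult_distrib[symmetric])
    also have "\<dots> \<le> (1/2)^J * (1/2)^j"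
      using j by (intro mult_right_mono power_decreasing) auto
    finally show "2^j * coeff_energy {..<M} (dilate_coeffs (stage j - stage J) (target j))
        \<le> (1/2)^J * (1/2)^j" .
  qed auto
  also have "\<dots> = 2 * (1/2)^J * (\<Sum>j\<in>{J<..R}. (1/2)^j)"
    by (simp add: sum_distrib_left mult.assoc)
  also have "\<dots> \<le> 2 * (1/2)^J * 2"
    by (intro mult_left_mono sum_power_half_le_2) auto
  finally show ?thesis by simp
qed

lemma coeff_energy_funpow_universal_coeffs_le:
  assumes only_trivial_positive_collatz_cycle
  shows "coeff_energy {3..<M} (\<lambda>m. (collatz_coeffs ^^ stage J) universal_coeffs m - c m)
           \<le> 3 * (real J * real J * tolerance J + coeff_energy {3..<M} (\<lambda>m. target J m - c m)
                  + 4 * (1/2)^J)"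
proof -
  define A where "A m = (\<Sum>i<J. (collatz_coeffs ^^ (stage J - stage i)) (target i) m)" for m
  define B where "B m = (\<Sum>j\<in>{J<..2^stage J * M}. dilate_coeffs (stage j - stage J) (target j) m)"
    for m
  have "(collatz_coeffs ^^ stage J) universal_coeffs m - c m = A m + (target J m - c m) + B m"
    if "m \<in> {3..<M}" for m
    using funpow_collatz_coeffs_universal_coeffs_split[of m M J] that by (simp add: A_def B_def)
  then have "coeff_energy {3..<M} (\<lambda>m. (collatz_coeffs ^^ stage J) universal_coeffs m - c m)
      = coeff_energy {3..<M} (\<lambda>m. A m + (target J m - c m) + B m)"
    unfolding coeff_energy_def by (intro sum.cong refl) presburger
  also have "\<dots> \<le> 3 * (coeff_energy {3..<M} A + coeff_energy {3..<M} (\<lambda>m. target J m - c m)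
                      + coeff_energy {3..<M} B)"
    by (rule coeff_energy_add3_le)
  also have "\<dots> \<le> 3 * (real J * real J * tolerance J + coeff_energy {3..<M} (\<lambda>m. target J m - c m)
                      + 4 * (1/2)^J)"
  proof -
    have "coeff_energy {3..<M} A \<le> real J * real J * tolerance J"
      unfolding A_def by (rule coeff_energy_early_blocks_le[OF assms])
    moreover have "coeff_energy {3..<M} B \<le> coeff_energy {..<M} B"
      by (rule coeff_energy_mono) auto
    moreover have "coeff_energy {..<M} B \<le> 4 * (1/2)^J"
      unfolding B_def by (rule coeff_energy_late_blocks_le)
    ultimately show ?thesis by simp
  qed
  finally show ?thesis .
qed

lemma square_mult_tolerance_le: "real J * real J * tolerance J \<le> 1 / (real J + 1)"
proof -
  have "real J * real J \<le> (real J + 1)^2"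
    by (simp add: power2_eq_square mult_mono)
  then have "real J * real J / (real J + 1)^3 \<le> (real J + 1)^2 / (real J + 1)^3"
    by (intro divide_right_mono) auto
  then show ?thesis
    by (simp add: tolerance_def power2_eq_square power3_eq_cube)
qed

lemma power_half_le_inverse_Suc: "(1/2::real)^J \<le> 1 / (real J + 1)"
proof -
  have "real J + 1 \<le> 2^J"
    using less_exp[of J] by (metis Suc_leI of_nat_Suc of_nat_le_iff of_nat_numeral of_nat_power add.commute)
  then show ?thesis by (simp add: power_one_over field_simps)
qed

lemma universal_coeffs_approximates:
  assumes only_trivial_positive_collatz_cycle
    and summable: "summable (\<lambda>n. norm (c n)^2 * bergman_weight n)" and "0 < \<epsilon>"
  obtains N where "\<And>M. coeff_energy {3..<M} (\<lambda>m. (collatz_coeffs ^^ N) universal_coeffs m - c m) \<le> \<epsilon>"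
proof -
  obtain L where L: "\<And>M. coeff_energy {3..<M} (\<lambda>m. gauss_rat_coeffs L m - c m) \<le> \<epsilon>/9"
    using gauss_rat_coeffs_dense[OF summable, of "\<epsilon>/9"] \<open>0 < \<epsilon>\<close> by auto
  obtain J0 :: nat where J0: "45 / \<epsilon> < real J0" using reals_Archimedean2 by blast
  define J where "J = prod_encode (to_nat L, J0)"
  have "J0 \<le> J" unfolding J_def by (rule le_prod_encode_2)
  have "target J = gauss_rat_coeffs L" by (simp add: J_def target_target_list_encode)
  have "45 / \<epsilon> < real J + 1"
    using J0 \<open>J0 \<le> J\<close> by linarith
  then have small: "1 / (real J + 1) \<le> \<epsilon> / 45"
    using \<open>0 < \<epsilon>\<close> by (simp add: field_simps)
  have early: "real J * real J * tolerance J \<le> \<epsilon> / 45"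
    using square_mult_tolerance_le[of J] small by linarith
  have late: "(1/2::real)^J \<le> \<epsilon> / 45"
    using power_half_le_inverse_Suc[of J] small by linarith
  have "coeff_energy {3..<M} (\<lambda>m. (collatz_coeffs ^^ stage J) universal_coeffs m - c m) \<le> \<epsilon>" for M
  proof -
    have "coeff_energy {3..<M} (\<lambda>m. (collatz_coeffs ^^ stage J) universal_coeffs m - c m)
        \<le> 3 * (real J * real J * tolerance J + coeff_energy {3..<M} (\<lambda>m. target J m - c m)
               + 4 * (1/2)^J)"
      by (rule coeff_energy_funpow_universal_coeffs_le[OF assms(1)])
    also have "\<dots> \<le> 3 * (\<epsilon>/45 + \<epsilon>/9 + 4 * (\<epsilon>/45))"
      using early late L[of M] \<open>target J = gauss_rat_coeffs L\<close> by (intro mult_left_mono add_mono) auto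
    also have "\<dots> \<le> \<epsilon>" using \<open>0 < \<epsilon>\<close> by simp
    finally show ?thesis .
  qed
  then show ?thesis using that by blast
qed

section \<open>The quotient distance\<close>

lemma bergman_weighted_summable_taylor_coeff:
  assumes "g \<in> bergman"
  shows "summable (\<lambda>n. norm (taylor_coeff g n)^2 * bergman_weight n)"
proof -
  have "g holomorphic_on ball 0 1" "(\<lambda>z. (cmod (g z))^2) integrable_on ball 0 1"
    using assms by (auto simp: bergman_def)
  then show ?thesis
    by (intro weighted_summable_if_integrable_norm_sq conv_radius_taylor_coeff)
       (auto simp: pser_taylor_coeff)
qed

lemma pser_in_bergman:
  assumes "summable (\<lambda>n. norm (c n)^2 * bergman_weight n)"
  shows "pser c \<in> bergman"
proof -
  have radius: "1 \<le> conv_radius c"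
    by (rule conv_radius_ge_1_if_weighted_summable[OF assms])
  have "((\<lambda>z. (cmod (pser c z))^2) has_integral (\<Sum>n. norm (c n)^2 * bergman_weight n)) (ball 0 1)"
    by (rule pser_has_integral_norm_sq[OF radius _ assms]) simp
  then show ?thesis
    using pser_holomorphic[OF radius] by (auto simp: bergman_def)
qed

lemma berg_norm_pser:
  assumes summable: "summable (\<lambda>n. norm (d n)^2 * bergman_weight n)"
    and "\<And>z. z \<in> ball 0 1 \<Longrightarrow> h z = pser d z"
  shows "berg_norm h = sqrt (\<Sum>n. norm (d n)^2 * bergman_weight n)"
  using pser_has_integral_norm_sq[OF conv_radius_ge_1_if_weighted_summable[OF summable] assms(2) summable]
  by (simp add: berg_norm_def integral_unique)

lemma berg_norm_nonneg: "0 \<le> berg_norm h"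
proof -
  have "0 \<le> integral (ball 0 1) (\<lambda>z. (cmod (h z))^2)"
    by (cases "(\<lambda>z. (cmod (h z))^2) integrable_on ball 0 1")
       (auto simp: integral_nonneg not_integrable_integral)
  then show ?thesis by (simp add: berg_norm_def)
qed

lemma quot_dist_le_berg_norm:
  "p \<in> polyX \<Longrightarrow> quot_dist u g \<le> berg_norm (\<lambda>z. u z - g z - p z)"
  unfolding quot_dist_def by (rule cInf_lower) (auto intro: bdd_belowI[of _ 0] simp: berg_norm_nonneg)

lemma quot_dist_le_sqrt_high_coeff_energy:
  assumes u: "u holomorphic_on ball 0 1" and g: "g holomorphic_on ball 0 1"
    and energy: "\<And>M. coeff_energy {3..<M} (\<lambda>m. taylor_coeff u m - taylor_coeff g m) \<le> \<delta>"
  shows "quot_dist u g \<le> sqrt \<delta>"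
proof -
  define x where "x = taylor_coeff u"
  define c where "c = taylor_coeff g"
  define d where "d m = (if m < 3 then 0 else x m - c m)" for m
  define pc where "pc m = (if m < 3 then x m - c m else 0)" for m
  define p where "p z = (x 0 - c 0) + (x 1 - c 1) * z + (x 2 - c 2) * z^2" for z
  have partial: "(\<Sum>n<M. norm (d n)^2 * bergman_weight n) = coeff_energy {3..<M} (\<lambda>m. x m - c m)" for M
    unfolding coeff_energy_def d_def by (rule sum.mono_neutral_cong_right) auto
  have summable: "summable (\<lambda>n. norm (d n)^2 * bergman_weight n)"
    using energy by (intro summableI_nonneg_bounded) (auto simp: partial x_def c_def bergman_weight_nonneg)
  have bound: "(\<Sum>n. norm (d n)^2 * bergman_weight n) \<le> \<delta>"
    using energy by (intro suminf_le_const[OF summable]) (simp add: partial x_def c_def)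
  have h: "u z - g z - p z = pser d z" if z: "z \<in> ball 0 1" for z
  proof -
    have "(\<lambda>m. pc m * z^m) sums (\<Sum>m\<in>{0, 1, 2}. pc m * z^m)"
      by (rule sums_finite) (auto simp: pc_def)
    then have "(\<lambda>m. pc m * z^m) sums p z"
      by (simp add: pc_def p_def power2_eq_square add.assoc)
    then have "(\<lambda>m. x m * z^m - c m * z^m - pc m * z^m) sums (u z - g z - p z)"
      using taylor_coeff_sums[OF u z] taylor_coeff_sums[OF g z]
      by (intro sums_diff) (simp_all add: x_def c_def)
    moreover have "(\<lambda>m. x m * z^m - c m * z^m - pc m * z^m) = (\<lambda>m. d m * z^m)"
      by (auto simp: fun_eq_iff d_def pc_def algebra_simps)
    moreover have "(\<lambda>m. d m * z^m) sums pser d z"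
      using z by (intro pser_sums ereal_less_conv_radius[OF conv_radius_ge_1_if_weighted_summable[OF summable]])
                 simp
    ultimately show ?thesis by (metis sums_unique2)
  qed
  have "p \<in> polyX" unfolding polyX_def p_def by blast
  then have "quot_dist u g \<le> berg_norm (\<lambda>z. u z - g z - p z)"
    by (rule quot_dist_le_berg_norm)
  also have "\<dots> = sqrt (\<Sum>n. norm (d n)^2 * bergman_weight n)"
    by (rule berg_norm_pser[OF summable h])
  also have "\<dots> \<le> sqrt \<delta>"
    using bound by simp
  finally show ?thesis .
qed

theorem mainTheorem2:
  assumes "\<forall>C. collatz_cycle C \<and> C \<subseteq> {0<..} \<longrightarrow> C = {1, 2}"
  shows "\<exists>f \<in> bergman. \<forall>g \<in> bergman. \<forall>\<epsilon> > 0.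
           \<exists>n. quot_dist ((collatz_op ^^ n) f) g < \<epsilon>"
proof -
  have cycles: only_trivial_positive_collatz_cycle
    using assms by (simp add: only_trivial_positive_collatz_cycle_def)
  define f where "f = pser universal_coeffs"
  have f: "f \<in> bergman"
    unfolding f_def by (rule pser_in_bergman[OF universal_coeffs_weighted_summable])
  then have f_coeffs: "f holomorphic_on ball 0 1" "taylor_coeff f = universal_coeffs"
    using taylor_coeff_eqI[OF conv_radius_ge_1_if_weighted_summable[OF universal_coeffs_weighted_summable]]
    by (auto simp: bergman_def f_def)
  show ?thesis
  proof (intro bexI[OF _ f] ballI allI impI)
    fix g :: "complex \<Rightarrow> complex" and \<epsilon> :: real
    assume g: "g \<in> bergman" and "0 < \<epsilon>"
    obtain N where N: "\<And>M. coeff_energy {3..<M}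
        (\<lambda>m. (collatz_coeffs ^^ N) universal_coeffs m - taylor_coeff g m) \<le> (\<epsilon>/2)^2"
      using universal_coeffs_approximates[OF cycles bergman_weighted_summable_taylor_coeff[OF g]]
        \<open>0 < \<epsilon>\<close> by (metis half_gt_zero zero_less_power)
    have "quot_dist ((collatz_op ^^ N) f) g \<le> sqrt ((\<epsilon>/2)^2)"
      using funpow_collatz_op_holomorphic_and_taylor_coeff[OF f_coeffs(1), of N] g N
      by (intro quot_dist_le_sqrt_high_coeff_energy) (auto simp: f_coeffs(2) bergman_def)
    then have "quot_dist ((collatz_op ^^ N) f) g < \<epsilon>"
      using \<open>0 < \<epsilon>\<close> by simp
    then show "\<exists>n. quot_dist ((collatz_op ^^ n) f) g < \<epsilon>" ..
  qed
qed

end
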